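(* Fix constants $0<\gamma_0\le 1$ and $\mu_0>0$. For each integer $t\ge 1$, let $X_1,\dots,X_t$ be independent random variables with $0\le X_j\le 1$, and suppose there are deterministic integers $M=M(t)$ and $1=s_1<s_2<\cdots<s_M=t$ and numbers $m(1),\dots,m(M-1)$ such that $\mathbb{E}X_j=m(k)$ for each $s_k\le j<s_{k+1}$ and $1\le k\le M-1$, and such that $$\min_{k}(s_{k+1}-s_k)\ge t^{\gamma_0}\quad\text{and}\quad \min_k m(k)\ge \mu_0 .$$ Let $0<\beta<\gamma<\gamma_0$ and $0<\delta<\frac{\gamma-\beta}{1-\beta}$. Let $Z_1,\dots,Z_t$ be independent Bernoulli random variables, independent of $(X_j)$, with $\mathbb{P}(Z_j=1)=j^{-\beta}=1-\mathbb{P}(Z_j=0)$. Let $\mathcal{E}(t)=\{1\le j\le t: Z_j=1\}$ and let $T(1)<T(2)<\cdots<T(w)$ be its elements. For $l\ge1$ let $\alpha_l=1-l^{-\delta}$, set $Y_0=0$ and define recursively $Y_l=\alpha_lY_{l-1}+(1-\alpha_l)X_{T(l)}$ for $1\le l\le w$. Then there are constants $b,\theta>0$ (not depending on $t$) such that, for all sufficiently large $t$, $$\mathbb{P}(E_{good})\ge 1-\exp(-t^{\theta}),$$ where $E_{good}$ is the event that both (i) $\#\mathcal{E}(t)\le \frac{4t^{1-\beta}}{1-\beta}$, and (ii) $|Y_l-m(k)|\le \frac{m(k)}{t^{b}}$ for every $1\le k\le M-1$ and every $l$ with $s_k+t^{\gamma}\le T(l)<s_{k+1}$.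
   Context: The intervals $s_k\le j<s_{k+1}$ are called epochs and the $s_k$ transition times; the sequence $(X_j)$ is piecewise stationary in mean. $\#A$ denotes the cardinality of a set $A$. The constants $\gamma_0,\mu_0,\beta,\gamma,\delta$ are fixed independently of $t$, while the sequences, $M$, the $s_k$ and the $m(k)$ may depend on $t$. *)

theory Defs
  imports "HOL-Probability.Probability"
begin

definition alpha :: "real \<Rightarrow> nat \<Rightarrow> real" where
  "alpha \<delta> l = 1 - real l powr (- \<delta>)"

text \<open>Y_0 = 0, Y_l = alpha_l Y_(l-1) + (1 - alpha_l) x_l, where x_l plays the role of X_(T(l)).\<close>
fun Yrec :: "real \<Rightarrow> (nat \<Rightarrow> real) \<Rightarrow> nat \<Rightarrow> real" where
  "Yrec \<delta> x 0 = 0"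
| "Yrec \<delta> x (Suc l) = alpha \<delta> (Suc l) * Yrec \<delta> x l + (1 - alpha \<delta> (Suc l)) * x (Suc l)"

definition arrival_set :: "nat \<Rightarrow> (nat \<Rightarrow> real) \<Rightarrow> nat set" where
  "arrival_set t z = {j \<in> {1..t}. z j = 1}"

definition arrival_time :: "nat \<Rightarrow> (nat \<Rightarrow> real) \<Rightarrow> nat \<Rightarrow> nat" where
  "arrival_time t z l = sorted_list_of_set (arrival_set t z) ! (l - 1)"

definition E_good ::
  "real \<Rightarrow> real \<Rightarrow> real \<Rightarrow> real \<Rightarrow> nat \<Rightarrow> nat \<Rightarrow> (nat \<Rightarrow> nat) \<Rightarrow> (nat \<Rightarrow> real)
   \<Rightarrow> (nat \<Rightarrow> real) \<Rightarrow> (nat \<Rightarrow> real) \<Rightarrow> bool" where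
  "E_good \<beta> \<gamma> \<delta> b t M s m x z \<longleftrightarrow>
     real (card (arrival_set t z)) \<le> 4 * real t powr (1 - \<beta>) / (1 - \<beta>) \<and>
     (\<forall>k \<in> {1..M-1}. \<forall>l \<in> {1..card (arrival_set t z)}.
        real (s k) + real t powr \<gamma> \<le> real (arrival_time t z l) \<and> arrival_time t z l < s (Suc k)
        \<longrightarrow> \<bar>Yrec \<delta> (\<lambda>i. x (arrival_time t z i)) l - m k\<bar> \<le> m k / real t powr b)"

end

theory Submission
  imports Defs "HOL-Real_Asymp.Real_Asymp"
begin

(*
  Unrolling the recursion, Y_l is a weighted average of the sampled values X_(T(i)), i <= l, with
  weights (1 - alpha_i) * prod_(i < r <= l) alpha_r.  By Chernoff bounds, with overwhelming probability
  there are at most 4 t^(1-beta)/(1-beta) arrivals, and every window of length t^gamma contains more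
  than t^(gamma-beta)/4 of them.  Then, for an arrival l at least t^gamma after the transition time s_k,
  the samples taken before s_k carry total weight at most exp (-t^(gamma-beta)/4 * w^(-delta)) with
  w = 4 t^(1-beta)/(1-beta), which is smaller than any power of t because delta < (gamma-beta)/(1-beta).
  The remaining samples all have mean m(k) and individually small weights, so Hoeffding's inequality,
  applied to the rewards for a fixed arrival set (the arrivals are independent of the rewards), shows
  that they average to m(k) up to t^(-b) except with probability exp (-c t^(2b)).  A union bound over
  the at most t^2 pairs (k, l) finishes the proof with b = theta = delta (gamma - beta) / 4.
*)

section \<open>Exponential smoothing as a weighted average\<close>

definition smoothing_weight :: "real \<Rightarrow> nat \<Rightarrow> nat \<Rightarrow> real" where
  "smoothing_weight \<delta> l i = (1 - alpha \<delta> i) * (\<Prod>r\<in>{i<..l}. alpha \<delta> r)"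

lemma smoothing_weight_Suc:
  "i \<le> l \<Longrightarrow> smoothing_weight \<delta> (Suc l) i = alpha \<delta> (Suc l) * smoothing_weight \<delta> l i"
proof -
  assume "i \<le> l"
  then have "{i<..Suc l} = insert (Suc l) {i<..l}" by auto
  then show ?thesis unfolding smoothing_weight_def by simp
qed

lemma smoothing_weight_diag: "smoothing_weight \<delta> l l = 1 - alpha \<delta> l"
  unfolding smoothing_weight_def by simp

lemma Yrec_eq_weighted_sum: "Yrec \<delta> x l = (\<Sum>i=1..l. smoothing_weight \<delta> l i * x i)"
proof (induction l)
  case 0
  then show ?case by simp
next
  case (Suc l)
  have "(\<Sum>i=1..l. smoothing_weight \<delta> (Suc l) i * x i)
      = alpha \<delta> (Suc l) * (\<Sum>i=1..l. smoothing_weight \<delta> l i * x i)"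
    by (simp add: sum_distrib_left smoothing_weight_Suc mult.assoc)
  then show ?case using Suc by (simp add: smoothing_weight_diag)
qed

lemma sum_smoothing_weight_from:
  "a \<le> Suc l \<Longrightarrow> (\<Sum>i=a..l. smoothing_weight \<delta> l i) = 1 - (\<Prod>r=a..l. alpha \<delta> r)"
proof (induction l)
  case 0
  then show ?case by (cases a) (simp_all add: smoothing_weight_diag)
next
  case (Suc l)
  show ?case
  proof (cases "a = Suc (Suc l)")
    case True
    then show ?thesis by simp
  next
    case False
    then have a: "a \<le> Suc l" using Suc by simp
    have "(\<Sum>i=a..Suc l. smoothing_weight \<delta> (Suc l) i)
        = alpha \<delta> (Suc l) * (\<Sum>i=a..l. smoothing_weight \<delta> l i) + (1 - alpha \<delta> (Suc l))"
      using a by (simp add: sum_distrib_left smoothing_weight_Suc smoothing_weight_diag)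
    also have "\<dots> = alpha \<delta> (Suc l) * (1 - (\<Prod>r=a..l. alpha \<delta> r)) + (1 - alpha \<delta> (Suc l))"
      using Suc.IH a by simp
    also have "\<dots> = 1 - alpha \<delta> (Suc l) * (\<Prod>r=a..l. alpha \<delta> r)"
      by (simp add: algebra_simps)
    finally show ?thesis using a by (simp add: atLeastAtMostSuc_conv)
  qed
qed

lemma sum_smoothing_weight: "1 \<le> l \<Longrightarrow> (\<Sum>i=1..l. smoothing_weight \<delta> l i) = 1"
proof -
  assume l: "1 \<le> l"
  have "(\<Prod>r=1..l. alpha \<delta> r) = 0"
    using l by (intro prod_zero) (auto intro!: bexI[of _ 1] simp: alpha_def)
  then show ?thesis using sum_smoothing_weight_from[of 1 l \<delta>] l by simp
qed

lemma alpha_nonneg: "0 < \<delta> \<Longrightarrow> 1 \<le> r \<Longrightarrow> 0 \<le> alpha \<delta> r"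
  unfolding alpha_def by (simp add: powr_minus_divide ge_one_powr_ge_zero)

lemma alpha_le_1: "alpha \<delta> r \<le> 1"
  unfolding alpha_def by simp

lemma prod_alpha_nonneg: "0 < \<delta> \<Longrightarrow> \<forall>r\<in>S. 1 \<le> r \<Longrightarrow> 0 \<le> (\<Prod>r\<in>S. alpha \<delta> r)"
  by (auto intro!: prod_nonneg alpha_nonneg)

lemma prod_alpha_le_1: "0 < \<delta> \<Longrightarrow> \<forall>r\<in>S. 1 \<le> r \<Longrightarrow> (\<Prod>r\<in>S. alpha \<delta> r) \<le> 1"
  by (auto intro!: prod_le_1 alpha_nonneg alpha_le_1)

lemma prod_alpha_le_exp:
  assumes "0 < \<delta>" "S \<subseteq> {1..w}"
  shows "(\<Prod>r\<in>S. alpha \<delta> r) \<le> exp (- real (card S) * real w powr (-\<delta>))"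
proof -
  have "(\<Prod>r\<in>S. alpha \<delta> r) \<le> (\<Prod>r\<in>S. exp (- (real w powr (-\<delta>))))"
  proof (rule prod_mono)
    fix r assume r: "r \<in> S"
    then have r1: "1 \<le> r" "r \<le> w" using assms by auto
    have "real w powr (-\<delta>) \<le> real r powr (-\<delta>)"
      using r1 assms by (intro powr_mono2') auto
    then have "alpha \<delta> r \<le> 1 - real w powr (-\<delta>)" unfolding alpha_def by simp
    also have "\<dots> \<le> exp (- (real w powr (-\<delta>)))"
      using exp_ge_add_one_self[of "- (real w powr (-\<delta>))"] by simp
    finally show "0 \<le> alpha \<delta> r \<and> alpha \<delta> r \<le> exp (- (real w powr (-\<delta>)))"
      using alpha_nonneg[OF assms(1) r1(1)] by simp
  qed
  also have "\<dots> = exp (- real (card S) * real w powr (-\<delta>))"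
    by (simp add: exp_of_nat_mult[symmetric] mult.commute)
  finally show ?thesis .
qed

lemma smoothing_weight_nonneg: "0 < \<delta> \<Longrightarrow> 1 \<le> i \<Longrightarrow> 0 \<le> smoothing_weight \<delta> l i"
  unfolding smoothing_weight_def by (auto intro!: mult_nonneg_nonneg prod_alpha_nonneg alpha_le_1)

lemma smoothing_weight_le_powr: "0 < \<delta> \<Longrightarrow> 1 \<le> i \<Longrightarrow> smoothing_weight \<delta> l i \<le> real i powr (-\<delta>)"
  unfolding smoothing_weight_def alpha_def
  by (auto intro!: mult_left_le prod_alpha_le_1[unfolded alpha_def])

lemma smoothing_weight_le_exp:
  assumes "0 < \<delta>" "1 \<le> i" "l \<le> w"
  shows "smoothing_weight \<delta> l i \<le> exp (- real (l - i) * real w powr (-\<delta>))"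
proof -
  have "(\<Prod>r\<in>{i<..l}. alpha \<delta> r) \<le> exp (- real (l - i) * real w powr (-\<delta>))"
    using assms prod_alpha_le_exp[of \<delta> "{i<..l}" w] by force
  moreover have "0 \<le> (\<Prod>r\<in>{i<..l}. alpha \<delta> r)"
    using assms by (intro prod_alpha_nonneg) auto
  moreover have "0 \<le> 1 - alpha \<delta> i" "1 - alpha \<delta> i \<le> 1"
    using alpha_nonneg[OF assms(1,2)] alpha_le_1[of \<delta> i] by auto
  ultimately show ?thesis
    unfolding smoothing_weight_def by (meson mult_left_le_one_le order_trans)
qed

text \<open>Old samples are damped by the product of the \<open>alpha\<close>'s, recent ones have a small index-\<open>i\<close> weight
  \<open>i powr -\<delta>\<close>; a split at distance \<open>L\<close> from \<open>l\<close> bounds every weight.\<close>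

lemma smoothing_weight_le_max:
  assumes "0 < \<delta>" "1 \<le> i" "i \<le> l" "l \<le> w" "real w \<le> W" "0 < L" "2 * L < real l"
  shows "smoothing_weight \<delta> l i \<le> max (exp (- L * W powr (-\<delta>))) (L powr (-\<delta>))"
proof (cases "L \<le> real (l - i)")
  case True
  have "W powr (-\<delta>) \<le> real w powr (-\<delta>)"
    using assms by (intro powr_mono2') auto
  then have "L * W powr (-\<delta>) \<le> real (l - i) * real w powr (-\<delta>)"
    using True assms by (intro mult_mono) auto
  then have "exp (- real (l - i) * real w powr (-\<delta>)) \<le> exp (- L * W powr (-\<delta>))"
    by simp
  with smoothing_weight_le_exp[OF assms(1,2,4)] show ?thesis
    by (meson max.cobounded1 order_trans)
next
  case False
  then have "L < real i" using assms by (simp add: of_nat_diff)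
  then have "real i powr (-\<delta>) \<le> L powr (-\<delta>)" using assms by (intro powr_mono2') auto
  then show ?thesis using smoothing_weight_le_powr[OF assms(1,2), of l] by simp
qed

text \<open>The samples before index \<open>a\<close> carry total weight \<open>P = \<Prod>r=a..l. alpha \<delta> r\<close>, so they
  move the average by at most \<open>P\<close>, and the remaining weights miss total mass one by \<open>P\<close>.\<close>

lemma Yrec_deviation_le:
  fixes x :: "nat \<Rightarrow> real"
  assumes "0 < \<delta>" "1 \<le> a" "a \<le> l"
    and x01: "\<forall>i\<in>{1..l}. 0 \<le> x i \<and> x i \<le> 1"
    and close: "\<bar>(\<Sum>i=a..l. smoothing_weight \<delta> l i * x i) - (\<Sum>i=a..l. smoothing_weight \<delta> l i * \<mu>)\<bar> < \<epsilon>"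
  shows "\<bar>Yrec \<delta> x l - \<mu>\<bar> \<le> (\<Prod>r=a..l. alpha \<delta> r) + \<epsilon> + \<bar>\<mu>\<bar> * (\<Prod>r=a..l. alpha \<delta> r)"
proof -
  define P where "P = (\<Prod>r=a..l. alpha \<delta> r)"
  define old where "old = (\<Sum>i\<in>{1..<a}. smoothing_weight \<delta> l i * x i)"
  define recent where "recent = (\<Sum>i=a..l. smoothing_weight \<delta> l i * x i)"
  have split: "{1..l} = {1..<a} \<union> {a..l}" using assms by auto
  have Y: "Yrec \<delta> x l = old + recent"
    unfolding Yrec_eq_weighted_sum old_def recent_def split by (subst sum.union_disjoint) auto
  have recent_mass: "(\<Sum>i=a..l. smoothing_weight \<delta> l i) = 1 - P"
    unfolding P_def using sum_smoothing_weight_from assms by simp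
  have "(\<Sum>i\<in>{1..<a}. smoothing_weight \<delta> l i) + (\<Sum>i=a..l. smoothing_weight \<delta> l i)
      = (\<Sum>i=1..l. smoothing_weight \<delta> l i)"
    unfolding split by (rule sum.union_disjoint[symmetric]) auto
  also have "\<dots> = 1" using sum_smoothing_weight assms by simp
  finally have old_mass: "(\<Sum>i\<in>{1..<a}. smoothing_weight \<delta> l i) = P"
    using recent_mass by simp
  have mean_mass: "(\<Sum>i=a..l. smoothing_weight \<delta> l i * \<mu>) = \<mu> * (1 - P)"
    using recent_mass by (simp add: sum_distrib_right[symmetric])
  have "0 \<le> old" unfolding old_def using x01 assms smoothing_weight_nonneg
    by (intro sum_nonneg mult_nonneg_nonneg) auto
  moreover have "old \<le> P" unfolding old_def old_mass[symmetric] using x01 assms smoothing_weight_nonneg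
    by (intro sum_mono) (auto intro: mult_left_le)
  moreover have "\<bar>recent - \<mu> * (1 - P)\<bar> < \<epsilon>"
    using close mean_mass unfolding recent_def by simp
  moreover have "\<bar>\<mu> * P\<bar> = \<bar>\<mu>\<bar> * P"
    unfolding P_def using assms by (simp add: abs_mult prod_alpha_nonneg)
  ultimately show ?thesis unfolding Y P_def[symmetric] by (simp add: algebra_simps)
qed

section \<open>The \<open>l\<close>-th smallest element of a finite set\<close>

definition nth_smallest :: "'a::linorder set \<Rightarrow> nat \<Rightarrow> 'a" where
  "nth_smallest A l = sorted_list_of_set A ! (l - 1)"

lemma arrival_time_eq_nth_smallest: "arrival_time t z = nth_smallest (arrival_set t z)"
  by (simp add: arrival_time_def nth_smallest_def fun_eq_iff)

lemma nth_smallest_in: "finite A \<Longrightarrow> 1 \<le> i \<Longrightarrow> i \<le> card A \<Longrightarrow> nth_smallest A i \<in> A"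
  unfolding nth_smallest_def
  by (metis diff_less less_le_trans less_numeral_extra(1) nth_mem
      sorted_list_of_set.length_sorted_key_list_of_set sorted_list_of_set.set_sorted_key_list_of_set)

lemma nth_smallest_less:
  assumes "finite A" "1 \<le> i" "i < i'" "i' \<le> card A"
  shows "nth_smallest A i < nth_smallest A i'"
proof -
  have sorted: "sorted_wrt (<) (sorted_list_of_set A)"
    using assms(1) by (simp add: strict_sorted_list_of_set)
  show ?thesis
    unfolding nth_smallest_def using assms by (intro sorted_wrt_nth_less[OF sorted]) auto
qed

lemma inj_on_nth_smallest: "finite A \<Longrightarrow> inj_on (nth_smallest A) {1..card A}"
  by (intro inj_onI) (metis atLeastAtMost_iff linorder_neqE_nat nth_smallest_less less_irrefl)

lemma nth_smallest_image_subset: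
  assumes "finite A" "A \<subseteq> B" "I \<subseteq> {1..card A}"
  shows "nth_smallest A ` I \<subseteq> B"
  using nth_smallest_in[OF assms(1)] assms(2,3) by fastforce

lemma card_less_nth_smallest:
  assumes "finite A" "1 \<le> i" "i \<le> card A"
  shows "card {j\<in>A. j < nth_smallest A i} = i - 1"
proof -
  define xs where "xs = sorted_list_of_set A"
  have sorted: "sorted_wrt (<) xs" using assms(1) by (simp add: strict_sorted_list_of_set xs_def)
  have xs: "set xs = A" "length xs = card A" "distinct xs" using assms(1) by (auto simp: xs_def)
  have "{j\<in>A. j < nth_smallest A i} = (\<lambda>q. xs ! q) ` {..<i-1}"
  proof safe
    fix j assume j: "j \<in> A" "j < nth_smallest A i"
    then obtain q where q: "q < length xs" "xs ! q = j" using xs by (metis in_set_conv_nth)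
    have "q < i - 1"
    proof (rule ccontr)
      assume "\<not> q < i - 1"
      then have "xs ! (i-1) \<le> xs ! q"
        using sorted q by (metis le_eq_less_or_eq not_less sorted_wrt_nth_less order.strict_implies_order)
      then show False using j q unfolding nth_smallest_def xs_def by simp
    qed
    then show "j \<in> (\<lambda>q. xs ! q) ` {..<i-1}" using q by auto
  next
    fix q assume q: "q < i - 1"
    show "xs ! q \<in> A" using q assms xs by auto
    show "xs ! q < nth_smallest A i" unfolding nth_smallest_def xs_def[symmetric]
      using q assms xs by (intro sorted_wrt_nth_less[OF sorted]) auto
  qed
  moreover have "inj_on (\<lambda>q. xs ! q) {..<i-1}"
    using xs assms by (intro inj_onI) (auto simp: nth_eq_iff_index_eq)
  ultimately show ?thesis by (simp add: card_image)
qed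

lemma le_nth_smallest_iff:
  assumes "finite A" "1 \<le> i" "i \<le> card A"
  shows "a \<le> nth_smallest A i \<longleftrightarrow> card {j\<in>A. j < a} < i"
proof
  assume "a \<le> nth_smallest A i"
  then have "card {j\<in>A. j < a} \<le> card {j\<in>A. j < nth_smallest A i}"
    using assms by (intro card_mono) auto
  then show "card {j\<in>A. j < a} < i" using card_less_nth_smallest[OF assms] assms by simp
next
  assume less: "card {j\<in>A. j < a} < i"
  show "a \<le> nth_smallest A i"
  proof (rule ccontr)
    assume "\<not> a \<le> nth_smallest A i"
    then have "insert (nth_smallest A i) {j\<in>A. j < nth_smallest A i} \<subseteq> {j\<in>A. j < a}"
      using nth_smallest_in[OF assms] by auto
    then have "card (insert (nth_smallest A i) {j\<in>A. j < nth_smallest A i}) \<le> card {j\<in>A. j < a}"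
      using assms by (intro card_mono) auto
    then show False using card_less_nth_smallest[OF assms] assms less by simp
  qed
qed

definition first_index_from :: "'a::linorder set \<Rightarrow> 'a \<Rightarrow> nat" where
  "first_index_from A a = card {j\<in>A. j < a} + 1"

lemma le_nth_smallest_iff_first_index:
  "finite A \<Longrightarrow> 1 \<le> i \<Longrightarrow> i \<le> card A \<Longrightarrow> a \<le> nth_smallest A i \<longleftrightarrow> first_index_from A a \<le> i"
  unfolding first_index_from_def by (simp add: le_nth_smallest_iff Suc_le_eq)

section \<open>Probabilistic tools\<close>

lemma (in prob_space) indep_sets_reindex:
  assumes indep: "indep_sets F (g ` I)" and inj: "inj_on g I"
  shows "indep_sets (\<lambda>i. F (g i)) I"
  unfolding indep_sets_def
proof (intro conjI ballI allI impI)
  fix i assume "i \<in> I"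
  then show "F (g i) \<subseteq> events" using indep unfolding indep_sets_def by auto
next
  fix J A assume J: "J \<subseteq> I" "J \<noteq> {}" "finite J" and A: "A \<in> Pi J (\<lambda>i. F (g i))"
  define A' where "A' = (\<lambda>y. A (the_inv_into J g y))"
  have injJ: "inj_on g J" using inj J(1) by (rule inj_on_subset)
  have A'g: "\<And>j. j \<in> J \<Longrightarrow> A' (g j) = A j"
    unfolding A'_def using injJ by (simp add: the_inv_into_f_f)
  have "A' \<in> Pi (g ` J) F" using A A'g by auto
  moreover have "g ` J \<subseteq> g ` I" "g ` J \<noteq> {}" "finite (g ` J)" using J by auto
  ultimately have "prob (\<Inter>j\<in>g ` J. A' j) = (\<Prod>j\<in>g ` J. prob (A' j))"
    using indep unfolding indep_sets_def by blast
  moreover have "(\<Inter>j\<in>g ` J. A' j) = (\<Inter>j\<in>J. A j)" using A'g by auto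
  moreover have "(\<Prod>j\<in>g ` J. prob (A' j)) = (\<Prod>j\<in>J. prob (A j))"
    using injJ A'g by (simp add: prod.reindex)
  ultimately show "prob (\<Inter>j\<in>J. A j) = (\<Prod>j\<in>J. prob (A j))" by simp
qed

lemma (in prob_space) indep_vars_reindex:
  assumes indep: "indep_vars M' Y (g ` I)" and inj: "inj_on g I"
  shows "indep_vars (\<lambda>i. M' (g i)) (\<lambda>i. Y (g i)) I"
proof -
  have "indep_sets (\<lambda>i. {Y i -` A \<inter> space M | A. A \<in> sets (M' i)}) (g ` I)"
    using indep unfolding indep_vars_def2 by auto
  from indep_sets_reindex[OF this inj]
  have "indep_sets (\<lambda>i. {Y (g i) -` A \<inter> space M | A. A \<in> sets (M' (g i))}) I" by simp
  moreover have "\<forall>i\<in>I. random_variable (M' (g i)) (Y (g i))"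
    using indep unfolding indep_vars_def2 by auto
  ultimately show ?thesis unfolding indep_vars_def2 by simp
qed

lemma (in prob_space) expectation_exp_bernoulli:
  fixes Z :: "'a \<Rightarrow> real"
  assumes [measurable]: "Z \<in> borel_measurable M" and Z01: "\<forall>\<omega>\<in>space M. Z \<omega> = 0 \<or> Z \<omega> = 1"
  shows "expectation (\<lambda>\<omega>. exp (c * Z \<omega>)) = 1 + (exp c - 1) * prob {\<omega>\<in>space M. Z \<omega> = 1}"
proof -
  have "expectation (\<lambda>\<omega>. exp (c * Z \<omega>))
      = expectation (\<lambda>\<omega>. 1 + (exp c - 1) * indicator {\<omega>\<in>space M. Z \<omega> = 1} \<omega>)"
    using Z01 by (intro Bochner_Integration.integral_cong) (auto simp: indicator_def)
  also have "\<dots> = 1 + (exp c - 1) * prob {\<omega>\<in>space M. Z \<omega> = 1}"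
    by (subst Bochner_Integration.integral_add)
      (auto simp: prob_space intro!: integrable_real_indicator simp: less_top[symmetric])
  finally show ?thesis .
qed

lemma (in prob_space) chernoff_bernoulli_sum:
  fixes Z :: "'i \<Rightarrow> 'a \<Rightarrow> real"
  assumes fin: "finite J" and indep: "indep_vars (\<lambda>_. borel) Z J"
    and Z01: "\<forall>j\<in>J. \<forall>\<omega>\<in>space M. Z j \<omega> = 0 \<or> Z j \<omega> = 1"
  shows "prob {\<omega>\<in>space M. c \<le> s * (\<Sum>j\<in>J. Z j \<omega>)}
           \<le> exp ((exp s - 1) * (\<Sum>j\<in>J. prob {\<omega>\<in>space M. Z j \<omega> = 1}) - c)"
proof -
  have [measurable]: "Z j \<in> borel_measurable M" if "j \<in> J" for j
    using indep that unfolding indep_vars_def by auto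
  define p where "p j = prob {\<omega>\<in>space M. Z j \<omega> = 1}" for j
  define E where "E j \<omega> = exp (s * Z j \<omega>)" for j \<omega>
  have indep_E: "indep_vars (\<lambda>_. borel) E J"
    unfolding E_def by (rule indep_vars_compose2[OF indep]) measurable
  have integrable_E: "integrable M (E j)" if "j \<in> J" for j
    unfolding E_def using that Z01
    by (intro integrable_const_bound[where B="exp \<bar>s\<bar>"]) (auto, fastforce)
  have mgf: "expectation (\<lambda>\<omega>. exp (s * (\<Sum>j\<in>J. Z j \<omega>))) = (\<Prod>j\<in>J. 1 + (exp s - 1) * p j)"
    using indep_vars_lebesgue_integral[OF fin indep_E integrable_E] Z01
    by (simp add: E_def sum_distrib_left exp_sum[OF fin] p_def expectation_exp_bernoulli)
  also have "\<dots> \<le> (\<Prod>j\<in>J. exp ((exp s - 1) * p j))"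
  proof (rule prod_mono)
    fix j
    have "0 \<le> (1 - p j) + exp s * p j" unfolding p_def by (intro add_nonneg_nonneg) auto
    then show "0 \<le> 1 + (exp s - 1) * p j \<and> 1 + (exp s - 1) * p j \<le> exp ((exp s - 1) * p j)"
      using exp_ge_add_one_self[of "(exp s - 1) * p j"] by (simp add: algebra_simps)
  qed
  also have "\<dots> = exp ((exp s - 1) * (\<Sum>j\<in>J. p j))"
    by (simp add: exp_sum[OF fin] sum_distrib_left)
  finally have mgf_le: "expectation (\<lambda>\<omega>. exp (s * (\<Sum>j\<in>J. Z j \<omega>))) \<le> exp ((exp s - 1) * (\<Sum>j\<in>J. p j))" .
  have integrable: "integrable M (\<lambda>\<omega>. exp (s * (\<Sum>j\<in>J. Z j \<omega>)))"
    using indep_vars_integrable[OF fin indep_E integrable_E]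
    by (simp add: E_def sum_distrib_left exp_sum[OF fin])
  have "prob {\<omega>\<in>space M. c \<le> s * (\<Sum>j\<in>J. Z j \<omega>)}
      = prob {\<omega>\<in>space M. exp c \<le> exp (s * (\<Sum>j\<in>J. Z j \<omega>))}"
    by simp
  also have "\<dots> \<le> expectation (\<lambda>\<omega>. exp (s * (\<Sum>j\<in>J. Z j \<omega>))) / exp c"
    by (rule integral_Markov_inequality_measure[OF integrable, where A="space M"]) auto
  also have "\<dots> \<le> exp ((exp s - 1) * (\<Sum>j\<in>J. p j)) / exp c"
    using mgf_le by (simp add: divide_right_mono)
  finally show ?thesis by (simp add: exp_diff p_def)
qed

lemma (in prob_space) hoeffding_weighted_sum:
  fixes X :: "'i \<Rightarrow> 'a \<Rightarrow> real"
  assumes "finite I" and indep: "indep_vars (\<lambda>_. borel) X I"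
    and X01: "\<forall>i\<in>I. \<forall>\<omega>\<in>space M. 0 \<le> X i \<omega> \<and> X i \<omega> \<le> 1"
    and w: "\<forall>i\<in>I. 0 \<le> w i" "0 < (\<Sum>i\<in>I. (w i)\<^sup>2)" and "0 \<le> \<epsilon>"
  shows "prob {\<omega>\<in>space M. \<epsilon> \<le> \<bar>(\<Sum>i\<in>I. w i * X i \<omega>) - (\<Sum>i\<in>I. w i * expectation (X i))\<bar>}
           \<le> 2 * exp (-2 * \<epsilon>\<^sup>2 / (\<Sum>i\<in>I. (w i)\<^sup>2))"
proof -
  define Y where "Y = (\<lambda>i \<omega>. w i * X i \<omega>)"
  interpret indep_interval_bounded_random_variables M I Y "\<lambda>_. 0" w
  proof
    show "finite I" by fact
    show "indep_vars (\<lambda>_. borel) Y I"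
      unfolding Y_def by (rule indep_vars_compose2[OF indep]) simp
    fix i assume "i \<in> I"
    then show "AE \<omega> in M. Y i \<omega> \<in> {0..w i}"
      using X01 w by (intro AE_I2) (auto simp: Y_def mult_left_le)
  qed
  interpret Hoeffding_ineq M I Y "\<lambda>_. 0" w "\<Sum>i\<in>I. expectation (Y i)"
    by unfold_locales simp
  have "(\<Sum>i\<in>I. expectation (Y i)) = (\<Sum>i\<in>I. w i * expectation (X i))"
    by (simp add: Y_def)
  then show ?thesis
    using Hoeffding_ineq_abs_ge[of \<epsilon>] assms by (simp add: Y_def)
qed

lemma (in prob_space) prob_indep_mixture_le:
  assumes indep: "indep_var Mx X Mz Z" and "finite G" "disjoint_family_on C G"
    and sets: "\<And>A. A \<in> G \<Longrightarrow> B A \<in> sets Mx" "\<And>A. A \<in> G \<Longrightarrow> C A \<in> sets Mz"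
    and bound: "\<And>A. A \<in> G \<Longrightarrow> prob {\<omega>\<in>space M. X \<omega> \<in> B A} \<le> q" and "0 \<le> q"
  shows "prob (\<Union>A\<in>G. {\<omega>\<in>space M. X \<omega> \<in> B A \<and> Z \<omega> \<in> C A}) \<le> q"
proof -
  have [measurable]: "X \<in> measurable M Mx" "Z \<in> measurable M Mz"
    using indep_var_rv1[OF indep] indep_var_rv2[OF indep] by auto
  have events: "{\<omega>\<in>space M. X \<omega> \<in> B A} \<in> events" "{\<omega>\<in>space M. Z \<omega> \<in> C A} \<in> events" if "A \<in> G" for A
    using sets[OF that] by measurable
  have factor: "prob {\<omega>\<in>space M. X \<omega> \<in> B A \<and> Z \<omega> \<in> C A}
      = prob {\<omega>\<in>space M. X \<omega> \<in> B A} * prob {\<omega>\<in>space M. Z \<omega> \<in> C A}" if "A \<in> G" for A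
    using indep_varD[OF indep sets[OF that]] by (simp add: vimage_def Int_def conj_commute)
  have "prob (\<Union>A\<in>G. {\<omega>\<in>space M. X \<omega> \<in> B A \<and> Z \<omega> \<in> C A})
      \<le> (\<Sum>A\<in>G. prob {\<omega>\<in>space M. X \<omega> \<in> B A \<and> Z \<omega> \<in> C A})"
    using events \<open>finite G\<close> by (intro finite_measure_subadditive_finite) auto
  also have "\<dots> \<le> (\<Sum>A\<in>G. q * prob {\<omega>\<in>space M. Z \<omega> \<in> C A})"
    using bound by (intro sum_mono) (simp add: factor mult_right_mono)
  also have "\<dots> = q * prob (\<Union>A\<in>G. {\<omega>\<in>space M. Z \<omega> \<in> C A})"
  proof -
    have "disjoint_family_on (\<lambda>A. {\<omega>\<in>space M. Z \<omega> \<in> C A}) G"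
      using \<open>disjoint_family_on C G\<close> unfolding disjoint_family_on_def by blast
    then show ?thesis
      using events \<open>finite G\<close> by (subst finite_measure_finite_Union) (auto simp: sum_distrib_left)
  qed
  also have "\<dots> \<le> q" using \<open>0 \<le> q\<close> by (simp add: mult_left_le)
  finally show ?thesis .
qed

lemma measurable_PiM_component_any [measurable]:
  "(\<lambda>f. f j) \<in> borel_measurable (PiM I (\<lambda>_. borel :: real measure))"
proof (cases "j \<in> I")
  case True
  then show ?thesis by measurable
next
  case False
  have "(\<lambda>f. undefined :: real) \<in> borel_measurable (PiM I (\<lambda>_. borel))" by simp
  then show ?thesis
    by (rule measurable_cong[THEN iffD1, rotated]) (use False in \<open>auto simp: space_PiM PiE_def extensional_def\<close>)
qed

section \<open>Bernoulli arrivals\<close>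

lemma powr_Suc_diff_ge:
  fixes n p :: real
  assumes "0 \<le> n" "0 < p" "p < 1"
  shows "(n + 1) powr (p - 1) \<le> ((n + 1) powr p - n powr p) / p"
proof (cases "n = 0")
  case True
  then show ?thesis using assms by simp
next
  case False
  then have n: "0 < n" using assms by simp
  have "\<exists>z>n. z < n + 1 \<and> (n + 1) powr p - n powr p = ((n + 1) - n) * (p * z powr (p - 1))"
    by (rule MVT2) (use n in \<open>auto intro!: has_real_derivative_powr\<close>)
  then obtain z where z: "n < z" "z < n + 1" "(n + 1) powr p - n powr p = ((n + 1) - n) * (p * z powr (p - 1))"
    by blast
  have "(n + 1) powr (p - 1) \<le> z powr (p - 1)" using z n assms by (intro powr_mono2') auto
  then show ?thesis using z assms by (simp add: field_simps)
qed

lemma sum_powr_neg_le: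
  fixes \<beta> :: real
  assumes "0 < \<beta>" "\<beta> < 1"
  shows "(\<Sum>j=1..t. real j powr (-\<beta>)) \<le> real t powr (1 - \<beta>) / (1 - \<beta>)"
proof (induction t)
  case 0
  then show ?case by simp
next
  case (Suc t)
  have "real (Suc t) powr (-\<beta>) \<le> (real (Suc t) powr (1 - \<beta>) - real t powr (1 - \<beta>)) / (1 - \<beta>)"
    using powr_Suc_diff_ge[of "real t" "1 - \<beta>"] assms by (simp add: add.commute)
  then show ?case using Suc by (simp add: diff_divide_distrib)
qed

lemma card_filter_eq_sum_01:
  fixes z :: "'i \<Rightarrow> real"
  assumes "finite S" "\<forall>j\<in>S. z j = 0 \<or> z j = 1"
  shows "real (card {j\<in>S. z j = 1}) = (\<Sum>j\<in>S. z j)"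
proof -
  have "(\<Sum>j\<in>S. z j) = (\<Sum>j\<in>S. if z j = 1 then 1 else 0)"
    using assms by (intro sum.cong) auto
  then show ?thesis using assms by (simp add: sum.inter_filter[symmetric])
qed

definition max_arrivals :: "real \<Rightarrow> nat \<Rightarrow> real" where
  "max_arrivals \<beta> t = 4 * real t powr (1 - \<beta>) / (1 - \<beta>)"

definition min_window_arrivals :: "real \<Rightarrow> real \<Rightarrow> nat \<Rightarrow> real" where
  "min_window_arrivals \<beta> \<gamma> t = real t powr (\<gamma> - \<beta>) / 4"

definition arrival_window :: "real \<Rightarrow> nat \<Rightarrow> nat \<Rightarrow> nat set" where
  "arrival_window \<gamma> t a = {j\<in>{1..t}. a \<le> j \<and> real j < real a + real t powr \<gamma>}"

definition regular_arrivals :: "real \<Rightarrow> real \<Rightarrow> nat \<Rightarrow> nat set \<Rightarrow> bool" where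
  "regular_arrivals \<beta> \<gamma> t A \<longleftrightarrow> real (card A) \<le> max_arrivals \<beta> t \<and>
     (\<forall>a\<in>{1..t}. real a + real t powr \<gamma> \<le> real t \<longrightarrow>
        min_window_arrivals \<beta> \<gamma> t < real (card (A \<inter> arrival_window \<gamma> t a)))"

lemma arrival_window_subset: "arrival_window \<gamma> t a \<subseteq> {1..t}"
  by (auto simp: arrival_window_def)

lemma card_arrival_window_ge:
  assumes "1 \<le> a" "real a + real t powr \<gamma> \<le> real t"
  shows "real t powr \<gamma> \<le> real (card (arrival_window \<gamma> t a))"
proof -
  define n where "n = nat \<lceil>real t powr \<gamma>\<rceil>"
  have "{a..<a+n} \<subseteq> arrival_window \<gamma> t a"
  proof
    fix j assume j: "j \<in> {a..<a+n}"
    then have "real j + 1 \<le> real a + real n" by simp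
    moreover have "real n < real t powr \<gamma> + 1"
      unfolding n_def using ceiling_correct[of "real t powr \<gamma>"] by simp
    ultimately show "j \<in> arrival_window \<gamma> t a" using j assms unfolding arrival_window_def by auto
  qed
  then have "card {a..<a+n} \<le> card (arrival_window \<gamma> t a)"
    by (intro card_mono) (auto simp: arrival_window_def)
  moreover have "real t powr \<gamma> \<le> real n"
    unfolding n_def using ceiling_correct[of "real t powr \<gamma>"] by simp
  ultimately show ?thesis by simp
qed

lemma irregular_arrivals_cases:
  fixes z :: "nat \<Rightarrow> real"
  assumes z01: "\<forall>j\<in>{1..t}. z j = 0 \<or> z j = 1" and "\<not> regular_arrivals \<beta> \<gamma> t {j\<in>{1..t}. z j = 1}"
  shows "max_arrivals \<beta> t \<le> (\<Sum>j=1..t. z j) \<or>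
    (\<exists>a\<in>{1..t}. real a + real t powr \<gamma> \<le> real t \<and>
       (\<Sum>j\<in>arrival_window \<gamma> t a. z j) \<le> min_window_arrivals \<beta> \<gamma> t)"
proof -
  have count: "real (card ({j\<in>{1..t}. z j = 1} \<inter> B)) = (\<Sum>j\<in>B. z j)" if "B \<subseteq> {1..t}" for B
  proof -
    have "{j\<in>{1..t}. z j = 1} \<inter> B = {j\<in>B. z j = 1}" using that by auto
    moreover have "finite B" using that by (rule finite_subset) simp
    ultimately show ?thesis using that z01 card_filter_eq_sum_01[of B z] by auto
  qed
  have "{j\<in>{1..t}. z j = 1} \<inter> {1..t} = {j\<in>{1..t}. z j = 1}" by auto
  with count[of "{1..t}"] have "real (card {j\<in>{1..t}. z j = 1}) = (\<Sum>j=1..t. z j)"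
    by simp
  then show ?thesis
    using assms count arrival_window_subset unfolding regular_arrivals_def by (auto simp: not_less)
qed

context prob_space
begin

lemma prob_many_arrivals:
  fixes Z :: "nat \<Rightarrow> 'a \<Rightarrow> real"
  assumes "0 < \<beta>" "\<beta> < 1" and indep: "indep_vars (\<lambda>_. borel) Z {1..t}"
    and Z01: "\<forall>j\<in>{1..t}. \<forall>\<omega>\<in>space M. Z j \<omega> = 0 \<or> Z j \<omega> = 1"
    and Zp: "\<forall>j\<in>{1..t}. prob {\<omega>\<in>space M. Z j \<omega> = 1} = real j powr (-\<beta>)"
  shows "prob {\<omega>\<in>space M. max_arrivals \<beta> t \<le> (\<Sum>j=1..t. Z j \<omega>)} \<le> exp (- max_arrivals \<beta> t / 2)"
proof -
  have "(\<Sum>j=1..t. prob {\<omega>\<in>space M. Z j \<omega> = 1}) = (\<Sum>j=1..t. real j powr (-\<beta>))"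
    using Zp by simp
  also have "\<dots> \<le> real t powr (1 - \<beta>) / (1 - \<beta>)"
    using sum_powr_neg_le[of \<beta> t] assms by simp
  also have "\<dots> = max_arrivals \<beta> t / 4"
    unfolding max_arrivals_def using assms by (simp add: field_simps)
  finally have mean: "(\<Sum>j=1..t. prob {\<omega>\<in>space M. Z j \<omega> = 1}) \<le> max_arrivals \<beta> t / 4" .
  have "exp 1 - 1 \<le> (2::real)" using exp_le by simp
  then have "(exp 1 - 1) * (\<Sum>j=1..t. prob {\<omega>\<in>space M. Z j \<omega> = 1}) \<le> 2 * (max_arrivals \<beta> t / 4)"
    using mean by (intro mult_mono) (auto intro: sum_nonneg)
  then have "exp ((exp 1 - 1) * (\<Sum>j=1..t. prob {\<omega>\<in>space M. Z j \<omega> = 1}) - max_arrivals \<beta> t)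
      \<le> exp (- max_arrivals \<beta> t / 2)"
    by simp
  moreover have "prob {\<omega>\<in>space M. max_arrivals \<beta> t \<le> (\<Sum>j=1..t. Z j \<omega>)}
      \<le> exp ((exp 1 - 1) * (\<Sum>j=1..t. prob {\<omega>\<in>space M. Z j \<omega> = 1}) - max_arrivals \<beta> t)"
    using chernoff_bernoulli_sum[OF _ indep Z01, of "max_arrivals \<beta> t" 1] by simp
  ultimately show ?thesis by (rule order_trans[rotated])
qed

lemma prob_few_window_arrivals:
  fixes Z :: "nat \<Rightarrow> 'a \<Rightarrow> real"
  assumes "0 < \<beta>" and indep: "indep_vars (\<lambda>_. borel) Z {1..t}"
    and Z01: "\<forall>j\<in>{1..t}. \<forall>\<omega>\<in>space M. Z j \<omega> = 0 \<or> Z j \<omega> = 1"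
    and Zp: "\<forall>j\<in>{1..t}. prob {\<omega>\<in>space M. Z j \<omega> = 1} = real j powr (-\<beta>)"
    and a: "1 \<le> a" "real a + real t powr \<gamma> \<le> real t"
  shows "prob {\<omega>\<in>space M. (\<Sum>j\<in>arrival_window \<gamma> t a. Z j \<omega>) \<le> min_window_arrivals \<beta> \<gamma> t}
           \<le> exp (- (real t powr (\<gamma> - \<beta>) / 4))"
proof -
  define W where "W = arrival_window \<gamma> t a"
  have W: "W \<subseteq> {1..t}" unfolding W_def by (rule arrival_window_subset)
  then have "finite W" by (rule finite_subset) simp
  have "real a \<le> real t" using a powr_ge_zero[of "real t" \<gamma>] by linarith
  then have "t \<ge> 1" using a by simp
  have "real t powr (\<gamma> - \<beta>) = real t powr \<gamma> * real t powr (-\<beta>)"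
    using \<open>t \<ge> 1\<close> by (simp add: powr_add[symmetric])
  also have "\<dots> \<le> real (card W) * real t powr (-\<beta>)"
    using card_arrival_window_ge[OF a] unfolding W_def by (intro mult_right_mono) auto
  also have "\<dots> = (\<Sum>j\<in>W. real t powr (-\<beta>))" by simp
  also have "\<dots> \<le> (\<Sum>j\<in>W. prob {\<omega>\<in>space M. Z j \<omega> = 1})"
  proof (rule sum_mono)
    fix j assume "j \<in> W"
    then have "j \<in> {1..t}" using W by auto
    then show "real t powr (-\<beta>) \<le> prob {\<omega>\<in>space M. Z j \<omega> = 1}"
      using Zp assms(1) by (auto intro!: powr_mono2')
  qed
  finally have mean: "real t powr (\<gamma> - \<beta>) \<le> (\<Sum>j\<in>W. prob {\<omega>\<in>space M. Z j \<omega> = 1})" .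
  have "exp (-1) \<le> (1/2::real)"
    using exp_ge_add_one_self[of 1] by (simp add: exp_minus field_simps)
  then have "(exp (-1) - 1) * (\<Sum>j\<in>W. prob {\<omega>\<in>space M. Z j \<omega> = 1})
      \<le> (-1/2) * (\<Sum>j\<in>W. prob {\<omega>\<in>space M. Z j \<omega> = 1})"
    by (intro mult_right_mono) (auto intro: sum_nonneg)
  also have "\<dots> \<le> (-1/2) * real t powr (\<gamma> - \<beta>)"
    using mean by simp
  finally have "exp ((exp (-1) - 1) * (\<Sum>j\<in>W. prob {\<omega>\<in>space M. Z j \<omega> = 1}) - - min_window_arrivals \<beta> \<gamma> t)
      \<le> exp (- (real t powr (\<gamma> - \<beta>) / 4))"
    unfolding min_window_arrivals_def by simp
  moreover have "prob {\<omega>\<in>space M. (\<Sum>j\<in>W. Z j \<omega>) \<le> min_window_arrivals \<beta> \<gamma> t}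
      \<le> exp ((exp (-1) - 1) * (\<Sum>j\<in>W. prob {\<omega>\<in>space M. Z j \<omega> = 1}) - - min_window_arrivals \<beta> \<gamma> t)"
    using chernoff_bernoulli_sum[OF \<open>finite W\<close> indep_vars_subset[OF indep W], of "- min_window_arrivals \<beta> \<gamma> t" "-1"]
      W Z01 by auto
  ultimately show ?thesis unfolding W_def by (rule order_trans[rotated])
qed

lemma prob_irregular_arrivals:
  fixes Z :: "nat \<Rightarrow> 'a \<Rightarrow> real"
  assumes "0 < \<beta>" "\<beta> < 1" and indep: "indep_vars (\<lambda>_. borel) Z {1..t}"
    and Z01: "\<forall>j\<in>{1..t}. \<forall>\<omega>\<in>space M. Z j \<omega> = 0 \<or> Z j \<omega> = 1"
    and Zp: "\<forall>j\<in>{1..t}. prob {\<omega>\<in>space M. Z j \<omega> = 1} = real j powr (-\<beta>)"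
  shows "prob {\<omega>\<in>space M. \<not> regular_arrivals \<beta> \<gamma> t {j\<in>{1..t}. Z j \<omega> = 1}}
           \<le> exp (- max_arrivals \<beta> t / 2) + real t * exp (- (real t powr (\<gamma> - \<beta>) / 4))"
proof -
  define starts where "starts = {a\<in>{1..t}. real a + real t powr \<gamma> \<le> real t}"
  define many where "many = {\<omega>\<in>space M. max_arrivals \<beta> t \<le> (\<Sum>j=1..t. Z j \<omega>)}"
  define few where
    "few a = {\<omega>\<in>space M. (\<Sum>j\<in>arrival_window \<gamma> t a. Z j \<omega>) \<le> min_window_arrivals \<beta> \<gamma> t}" for a
  have Z_measurable: "Z j \<in> borel_measurable M" if "j \<in> {1..t}" for j
    using indep that unfolding indep_vars_def by auto
  have "(\<lambda>\<omega>. \<Sum>j=1..t. Z j \<omega>) \<in> borel_measurable M"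
    using Z_measurable by (intro borel_measurable_sum) auto
  then have many_event: "many \<in> events" unfolding many_def by measurable
  have "(\<lambda>\<omega>. \<Sum>j\<in>arrival_window \<gamma> t a. Z j \<omega>) \<in> borel_measurable M" for a
    using Z_measurable arrival_window_subset[of \<gamma> t a] by (intro borel_measurable_sum) auto
  then have few_event: "few a \<in> events" for a unfolding few_def by measurable
  have "{\<omega>\<in>space M. \<not> regular_arrivals \<beta> \<gamma> t {j\<in>{1..t}. Z j \<omega> = 1}} \<subseteq> many \<union> (\<Union>a\<in>starts. few a)"
  proof
    fix \<omega> assume \<omega>: "\<omega> \<in> {\<omega>\<in>space M. \<not> regular_arrivals \<beta> \<gamma> t {j\<in>{1..t}. Z j \<omega> = 1}}"
    then have "\<forall>j\<in>{1..t}. Z j \<omega> = 0 \<or> Z j \<omega> = 1" "\<not> regular_arrivals \<beta> \<gamma> t {j\<in>{1..t}. Z j \<omega> = 1}"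
      using Z01 by auto
    from irregular_arrivals_cases[OF this] \<omega> show "\<omega> \<in> many \<union> (\<Union>a\<in>starts. few a)"
      unfolding many_def few_def starts_def by auto
  qed
  then have "prob {\<omega>\<in>space M. \<not> regular_arrivals \<beta> \<gamma> t {j\<in>{1..t}. Z j \<omega> = 1}}
      \<le> prob (many \<union> (\<Union>a\<in>starts. few a))"
    using many_event few_event by (intro finite_measure_mono) (auto simp: starts_def)
  also have "\<dots> \<le> prob many + prob (\<Union>a\<in>starts. few a)"
    using many_event few_event by (intro measure_Un_le) (auto simp: starts_def)
  also have "prob (\<Union>a\<in>starts. few a) \<le> (\<Sum>a\<in>starts. prob (few a))"
    using few_event by (intro finite_measure_subadditive_finite) (auto simp: starts_def)
  also have "prob many + (\<Sum>a\<in>starts. prob (few a))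
      \<le> exp (- max_arrivals \<beta> t / 2) + (\<Sum>a\<in>starts. exp (- (real t powr (\<gamma> - \<beta>) / 4)))"
    unfolding many_def few_def starts_def
    by (intro add_mono sum_mono prob_many_arrivals prob_few_window_arrivals assms) auto
  also have "\<dots> \<le> exp (- max_arrivals \<beta> t / 2) + real t * exp (- (real t powr (\<gamma> - \<beta>) / 4))"
  proof -
    have "starts \<subseteq> {1..t}" by (auto simp: starts_def)
    then have "card starts \<le> card {1..t}" by (intro card_mono) auto
    then have "card starts \<le> t" by simp
    then show ?thesis by (simp add: mult_right_mono)
  qed
  finally show ?thesis by simp
qed

end

lemma arrival_set_subset: "arrival_set t z \<subseteq> {1..t}"
  by (auto simp: arrival_set_def)

lemma finite_arrival_set: "finite (arrival_set t z)"
  using arrival_set_subset by (rule finite_subset) simp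

lemma arrival_set_eq_iff:
  "A \<subseteq> {1..t} \<Longrightarrow> arrival_set t z = A \<longleftrightarrow> (\<forall>j\<in>{1..t}. (z j = 1) = (j \<in> A))"
  by (auto simp: arrival_set_def)

lemma E_good_cong:
  assumes "\<forall>j\<in>{1..t}. x j = x' j" "\<forall>j\<in>{1..t}. z j = z' j"
  shows "E_good \<beta> \<gamma> \<delta> b t K s m x z = E_good \<beta> \<gamma> \<delta> b t K s m x' z'"
proof -
  define A where "A = arrival_set t z"
  have "arrival_set t z' = A" unfolding A_def arrival_set_def using assms(2) by auto
  have "Yrec \<delta> (\<lambda>i. x (nth_smallest A i)) l = Yrec \<delta> (\<lambda>i. x' (nth_smallest A i)) l"
    if "l \<le> card A" for l
    unfolding Yrec_eq_weighted_sum
  proof (intro sum.cong refl)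
    fix i assume "i \<in> {1..l}"
    then have "nth_smallest A i \<in> A"
      using that unfolding A_def by (intro nth_smallest_in[OF finite_arrival_set]) auto
    then have "nth_smallest A i \<in> {1..t}"
      using arrival_set_subset unfolding A_def by blast
    then show "smoothing_weight \<delta> l i * x (nth_smallest A i) = smoothing_weight \<delta> l i * x' (nth_smallest A i)"
      using assms by simp
  qed
  then show ?thesis
    unfolding E_good_def arrival_time_eq_nth_smallest A_def[symmetric] \<open>arrival_set t z' = A\<close> by auto
qed

locale sampled_sequence = prob_space +
  fixes X Z :: "nat \<Rightarrow> 'a \<Rightarrow> real" and t :: nat
  assumes indep: "indep_vars (\<lambda>_. borel) (\<lambda>i. case i of Inl j \<Rightarrow> X j | Inr j \<Rightarrow> Z j) ({1..t} <+> {1..t})"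
begin

definition X_vector :: "'a \<Rightarrow> nat \<Rightarrow> real" where "X_vector \<omega> = (\<lambda>j\<in>{1..t}. X j \<omega>)"
definition Z_vector :: "'a \<Rightarrow> nat \<Rightarrow> real" where "Z_vector \<omega> = (\<lambda>j\<in>{1..t}. Z j \<omega>)"

lemma indep_X: "indep_vars (\<lambda>_. borel) X {1..t}"
proof -
  have "indep_vars (\<lambda>_. borel) (\<lambda>i. case i of Inl j \<Rightarrow> X j | Inr j \<Rightarrow> Z j) (Inl ` {1..t})"
    using indep by (rule indep_vars_subset) auto
  from indep_vars_reindex[OF this] show ?thesis by (simp add: inj_on_def)
qed

lemma indep_Z: "indep_vars (\<lambda>_. borel) Z {1..t}"
proof -
  have "indep_vars (\<lambda>_. borel) (\<lambda>i. case i of Inl j \<Rightarrow> X j | Inr j \<Rightarrow> Z j) (Inr ` {1..t})"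
    using indep by (rule indep_vars_subset) auto
  from indep_vars_reindex[OF this] show ?thesis by (simp add: inj_on_def)
qed

lemma X_measurable: "j \<in> {1..t} \<Longrightarrow> X j \<in> borel_measurable M"
  using indep_X unfolding indep_vars_def by auto

lemma Z_measurable: "j \<in> {1..t} \<Longrightarrow> Z j \<in> borel_measurable M"
  using indep_Z unfolding indep_vars_def by auto

lemma X_vector_measurable: "X_vector \<in> measurable M (PiM {1..t} (\<lambda>_. borel))"
  unfolding X_vector_def by (rule measurable_restrict) (rule X_measurable)

lemma Z_vector_measurable: "Z_vector \<in> measurable M (PiM {1..t} (\<lambda>_. borel))"
  unfolding Z_vector_def by (rule measurable_restrict) (rule Z_measurable)

lemma X_vector_component_measurable [measurable]: "(\<lambda>\<omega>. X_vector \<omega> j) \<in> borel_measurable M"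
  using measurable_compose[OF X_vector_measurable measurable_PiM_component_any] by simp

lemma X_vector_in_space: "X_vector \<omega> \<in> space (PiM {1..t} (\<lambda>_. borel))"
  unfolding X_vector_def space_PiM by auto

lemma Z_vector_in_space: "Z_vector \<omega> \<in> space (PiM {1..t} (\<lambda>_. borel))"
  unfolding Z_vector_def space_PiM by auto

lemma indep_var_X_Z_vectors: "indep_var (PiM {1..t} (\<lambda>_. borel)) X_vector (PiM {1..t} (\<lambda>_. borel)) Z_vector"
proof -
  define V where "V = (\<lambda>i. case i of Inl j \<Rightarrow> X j | Inr j \<Rightarrow> Z j)"
  define left where "left = (\<lambda>f :: nat + nat \<Rightarrow> real. \<lambda>j\<in>{1..t}. f (Inl j))"
  define right where "right = (\<lambda>f :: nat + nat \<Rightarrow> real. \<lambda>j\<in>{1..t}. f (Inr j))"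
  have restrict: "indep_var (PiM (Inl ` {1..t}) (\<lambda>_. borel)) (\<lambda>\<omega>. restrict (\<lambda>i. V i \<omega>) (Inl ` {1..t}))
           (PiM (Inr ` {1..t}) (\<lambda>_. borel)) (\<lambda>\<omega>. restrict (\<lambda>i. V i \<omega>) (Inr ` {1..t}))"
    using indep unfolding V_def by (intro indep_var_restrict) auto
  have "left \<in> measurable (PiM (Inl ` {1..t}) (\<lambda>_. borel)) (PiM {1..t} (\<lambda>_. borel))"
    unfolding left_def by (rule measurable_restrict) (rule measurable_component_singleton, auto)
  moreover have "right \<in> measurable (PiM (Inr ` {1..t}) (\<lambda>_. borel)) (PiM {1..t} (\<lambda>_. borel))"
    unfolding right_def by (rule measurable_restrict) (rule measurable_component_singleton, auto)
  ultimately have "indep_var (PiM {1..t} (\<lambda>_. borel)) (left \<circ> (\<lambda>\<omega>. restrict (\<lambda>i. V i \<omega>) (Inl ` {1..t})))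
      (PiM {1..t} (\<lambda>_. borel)) (right \<circ> (\<lambda>\<omega>. restrict (\<lambda>i. V i \<omega>) (Inr ` {1..t})))"
    by (rule indep_var_compose[OF restrict])
  moreover have "left \<circ> (\<lambda>\<omega>. restrict (\<lambda>i. V i \<omega>) (Inl ` {1..t})) = X_vector"
    by (auto simp: left_def X_vector_def V_def fun_eq_iff restrict_def)
  moreover have "right \<circ> (\<lambda>\<omega>. restrict (\<lambda>i. V i \<omega>) (Inr ` {1..t})) = Z_vector"
    by (auto simp: right_def Z_vector_def V_def fun_eq_iff restrict_def)
  ultimately show ?thesis by simp
qed

lemma indep_X_nth_smallest:
  assumes "A \<subseteq> {1..t}" "I \<subseteq> {1..card A}"
  shows "indep_vars (\<lambda>_. borel) (\<lambda>i. X (nth_smallest A i)) I"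
proof -
  have "finite A" using assms(1) by (rule finite_subset) simp
  then show ?thesis
    using indep_vars_reindex[OF indep_vars_subset[OF indep_X nth_smallest_image_subset]]
      inj_on_subset[OF inj_on_nth_smallest assms(2)] assms
    by simp
qed

lemma arrival_set_Z_vector: "arrival_set t (Z_vector \<omega>) = {j\<in>{1..t}. Z j \<omega> = 1}"
  by (auto simp: arrival_set_def Z_vector_def)

lemma arrival_set_event:
  assumes "\<And>A. {x\<in>space (PiM {1..t} (\<lambda>_. borel)). P A x} \<in> sets (PiM {1..t} (\<lambda>_. borel))"
  shows "{\<omega>\<in>space M. P (arrival_set t (Z_vector \<omega>)) (X_vector \<omega>)} \<in> events"
proof -
  define C where "C A = {z\<in>space (PiM {1..t} (\<lambda>_. borel)). arrival_set t z = A}" for A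
  have C: "C A \<in> sets (PiM {1..t} (\<lambda>_. borel))" for A
  proof (cases "A \<subseteq> {1..t}")
    case True
    then show ?thesis unfolding C_def arrival_set_eq_iff[OF True] by measurable
  next
    case False
    then have "C A = {}" unfolding C_def using arrival_set_subset by blast
    then show ?thesis by simp
  qed
  have "{\<omega>\<in>space M. P (arrival_set t (Z_vector \<omega>)) (X_vector \<omega>)}
      = (\<Union>A\<in>Pow {1..t}. (Z_vector -` C A \<inter> space M) \<inter> (X_vector -` {x\<in>space (PiM {1..t} (\<lambda>_. borel)). P A x} \<inter> space M))"
    using arrival_set_subset X_vector_in_space Z_vector_in_space unfolding C_def by auto
  also have "\<dots> \<in> events"
    using measurable_sets[OF Z_vector_measurable C] measurable_sets[OF X_vector_measurable assms] by auto
  finally show ?thesis .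
qed

end

section \<open>Tracking the epoch means\<close>

locale smoothing_tracking = sampled_sequence +
  \<comment> \<open>\<open>K\<close> is the number \<open>M\<close> of transition times of the theorem; \<open>M\<close> is the probability space here.\<close>
  fixes \<beta> \<gamma> \<delta> \<mu>\<^sub>0 b :: real and K :: nat and s :: "nat \<Rightarrow> nat" and m :: "nat \<Rightarrow> real"
  assumes params: "0 < \<beta>" "\<beta> < \<gamma>" "\<gamma> < 1" "0 < \<delta>" "0 < \<mu>\<^sub>0" "0 < b"
    and t_ge_1: "1 \<le> t"
    and X01: "\<forall>j\<in>{1..t}. \<forall>\<omega>\<in>space M. 0 \<le> X j \<omega> \<and> X j \<omega> \<le> 1"
    and Z01: "\<forall>j\<in>{1..t}. \<forall>\<omega>\<in>space M. Z j \<omega> = 0 \<or> Z j \<omega> = 1"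
    and Z_prob: "\<forall>j\<in>{1..t}. prob {\<omega>\<in>space M. Z j \<omega> = 1} = real j powr (-\<beta>)"
    and s_ge: "\<forall>k\<in>{1..K-1}. k \<le> s k"
    and mean: "\<forall>k\<in>{1..K-1}. \<forall>j. s k \<le> j \<and> j < s (Suc k) \<longrightarrow> expectation (X j) = m k"
    and mean_ge: "\<forall>k\<in>{1..K-1}. \<mu>\<^sub>0 \<le> m k"
    \<comment> \<open>\<open>forgetting\<close> bounds the weight of the samples taken before the current epoch,
        \<open>small_weights\<close> the single weights entering Hoeffding's inequality; both hold for large \<open>t\<close>.\<close>
    and forgetting: "exp (- min_window_arrivals \<beta> \<gamma> t * max_arrivals \<beta> t powr (-\<delta>))
                       \<le> min \<mu>\<^sub>0 1 * real t powr (-b) / 4"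
    and small_weights: "exp (- (min_window_arrivals \<beta> \<gamma> t / 2) * max_arrivals \<beta> t powr (-\<delta>))
                          \<le> (min_window_arrivals \<beta> \<gamma> t / 2) powr (-\<delta>)"
begin

abbreviation L :: real where "L \<equiv> min_window_arrivals \<beta> \<gamma> t"
abbreviation tol :: real where "tol \<equiv> \<mu>\<^sub>0 * real t powr (-b) / 2"

definition tracked_pairs :: "nat set \<Rightarrow> (nat \<times> nat) set" where
  "tracked_pairs A = {(k, l). k \<in> {1..K-1} \<and> l \<in> {1..card A} \<and>
     real (s k) + real t powr \<gamma> \<le> real (nth_smallest A l) \<and> nth_smallest A l < s (Suc k)}"

definition tail_close :: "nat set \<Rightarrow> nat \<Rightarrow> nat \<Rightarrow> (nat \<Rightarrow> real) \<Rightarrow> bool" where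
  "tail_close A k l x \<longleftrightarrow>
     \<bar>(\<Sum>i=first_index_from A (s k)..l. smoothing_weight \<delta> l i * x (nth_smallest A i))
      - (\<Sum>i=first_index_from A (s k)..l. smoothing_weight \<delta> l i * m k)\<bar> < tol"

definition tails_close :: "nat set \<Rightarrow> (nat \<Rightarrow> real) \<Rightarrow> bool" where
  "tails_close A x \<longleftrightarrow> (\<forall>(k, l)\<in>tracked_pairs A. tail_close A k l x)"

lemma tails_close_iff: "tails_close A x \<longleftrightarrow> (\<forall>k\<in>{1..K-1}. \<forall>l\<in>{1..card A}.
     real (s k) + real t powr \<gamma> \<le> real (nth_smallest A l) \<and> nth_smallest A l < s (Suc k) \<longrightarrow> tail_close A k l x)"
  unfolding tails_close_def tracked_pairs_def by auto

lemma L_pos: "0 < L"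
  unfolding min_window_arrivals_def using t_ge_1 by simp

lemma tracked_pairD:
  assumes A: "A \<subseteq> {1..t}" and kl: "(k, l) \<in> tracked_pairs A"
  shows "k \<in> {1..K-1}" "1 \<le> l" "l \<le> card A" "first_index_from A (s k) \<le> l"
    "\<forall>i\<in>{first_index_from A (s k)..l}. s k \<le> nth_smallest A i \<and> nth_smallest A i < s (Suc k)"
    "k \<le> t" "l \<le> t"
proof -
  have fin: "finite A" using A by (rule finite_subset) simp
  show k: "k \<in> {1..K-1}" and l: "1 \<le> l" "l \<le> card A"
    using kl unfolding tracked_pairs_def by auto
  have start: "real (s k) + real t powr \<gamma> \<le> real (nth_smallest A l)" and stop: "nth_smallest A l < s (Suc k)"
    using kl unfolding tracked_pairs_def by auto
  have "s k \<le> nth_smallest A l" using start powr_ge_zero[of "real t" \<gamma>] by linarith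
  then show first: "first_index_from A (s k) \<le> l"
    using le_nth_smallest_iff_first_index[OF fin l] by simp
  show "\<forall>i\<in>{first_index_from A (s k)..l}. s k \<le> nth_smallest A i \<and> nth_smallest A i < s (Suc k)"
  proof
    fix i assume i: "i \<in> {first_index_from A (s k)..l}"
    then have i1: "1 \<le> i" "i \<le> card A" using l unfolding first_index_from_def by auto
    have "s k \<le> nth_smallest A i" using le_nth_smallest_iff_first_index[OF fin i1] i by auto
    moreover have "nth_smallest A i \<le> nth_smallest A l"
      using nth_smallest_less[OF fin i1(1) _ l(2)] i by (cases "i = l") auto
    ultimately show "s k \<le> nth_smallest A i \<and> nth_smallest A i < s (Suc k)" using stop by simp
  qed
  have "nth_smallest A l \<in> A" using nth_smallest_in[OF fin l] .
  then have "nth_smallest A l \<le> t" using A by auto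
  moreover have "k \<le> s k" using s_ge k by blast
  ultimately show "k \<le> t" using \<open>s k \<le> nth_smallest A l\<close> by linarith
  have "card A \<le> card {1..t}" using A by (intro card_mono) auto
  then show "l \<le> t" using l by simp
qed

text \<open>The first \<open>t powr \<gamma>\<close> steps of epoch \<open>k\<close> form a full arrival window lying between
  \<open>s k\<close> and the \<open>l\<close>-th arrival; on regular arrival sets it contains more than \<open>L\<close> arrivals.\<close>

lemma L_less_tail_length:
  assumes A: "A \<subseteq> {1..t}" and regular: "regular_arrivals \<beta> \<gamma> t A" and kl: "(k, l) \<in> tracked_pairs A"
  shows "L < real (l - first_index_from A (s k))"
proof -
  have fin: "finite A" using A by (rule finite_subset) simp
  note pair = tracked_pairD[OF A kl]
  have start: "real (s k) + real t powr \<gamma> \<le> real (nth_smallest A l)"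
    using kl unfolding tracked_pairs_def by auto
  have "nth_smallest A l \<le> t" using nth_smallest_in[OF fin pair(2,3)] A by auto
  then have "real (s k) + real t powr \<gamma> \<le> real t" using start by linarith
  moreover have "s k \<in> {1..t}"
  proof -
    have "real (s k) \<le> real t" using calculation powr_ge_zero[of "real t" \<gamma>] by linarith
    moreover have "k \<le> s k" using s_ge pair(1) by blast
    ultimately show ?thesis using pair(1) by simp
  qed
  ultimately have "L < real (card (A \<inter> arrival_window \<gamma> t (s k)))"
    using regular unfolding regular_arrivals_def by blast
  also have "card (A \<inter> arrival_window \<gamma> t (s k))
      \<le> card ({j\<in>A. j < nth_smallest A l} - {j\<in>A. j < s k})"
    using start fin by (intro card_mono) (auto simp: arrival_window_def)
  also have "\<dots> = card {j\<in>A. j < nth_smallest A l} - card {j\<in>A. j < s k}"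
  proof -
    have "s k \<le> nth_smallest A l" using start powr_ge_zero[of "real t" \<gamma>] by linarith
    then have "{j\<in>A. j < s k} \<subseteq> {j\<in>A. j < nth_smallest A l}" by auto
    then show ?thesis using fin by (intro card_Diff_subset) auto
  qed
  also have "\<dots> = l - first_index_from A (s k)"
    using card_less_nth_smallest[OF fin pair(2,3)] unfolding first_index_from_def by simp
  finally show ?thesis by simp
qed

lemma prod_alpha_tail_le:
  assumes A: "A \<subseteq> {1..t}" and regular: "regular_arrivals \<beta> \<gamma> t A" and kl: "(k, l) \<in> tracked_pairs A"
  shows "(\<Prod>r=first_index_from A (s k)..l. alpha \<delta> r) \<le> min \<mu>\<^sub>0 1 * real t powr (-b) / 4"
proof -
  note pair = tracked_pairD[OF A kl]
  define a where "a = first_index_from A (s k)"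
  have "(\<Prod>r=a..l. alpha \<delta> r) \<le> exp (- real (card {a..l}) * real (card A) powr (-\<delta>))"
    using pair params unfolding a_def first_index_from_def by (intro prod_alpha_le_exp) auto
  also have "\<dots> \<le> exp (- L * max_arrivals \<beta> t powr (-\<delta>))"
  proof -
    have "L \<le> real (card {a..l})"
      using L_less_tail_length[OF A regular kl] pair unfolding a_def by simp
    moreover have "max_arrivals \<beta> t powr (-\<delta>) \<le> real (card A) powr (-\<delta>)"
      using regular pair params unfolding regular_arrivals_def by (intro powr_mono2') auto
    ultimately have "L * max_arrivals \<beta> t powr (-\<delta>) \<le> real (card {a..l}) * real (card A) powr (-\<delta>)"
      using L_pos by (intro mult_mono) auto
    then show ?thesis by simp
  qed
  finally show ?thesis unfolding a_def using forgetting by simp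
qed

lemma Yrec_close_if_tail_close:
  assumes A: "A \<subseteq> {1..t}" and regular: "regular_arrivals \<beta> \<gamma> t A" and kl: "(k, l) \<in> tracked_pairs A"
    and x01: "\<forall>j\<in>{1..t}. 0 \<le> x j \<and> x j \<le> 1" and close: "tail_close A k l x"
  shows "\<bar>Yrec \<delta> (\<lambda>i. x (nth_smallest A i)) l - m k\<bar> \<le> m k / real t powr b"
proof -
  note pair = tracked_pairD[OF A kl]
  have fin: "finite A" using A by (rule finite_subset) simp
  define P where "P = (\<Prod>r=first_index_from A (s k)..l. alpha \<delta> r)"
  have "\<forall>i\<in>{1..l}. 0 \<le> x (nth_smallest A i) \<and> x (nth_smallest A i) \<le> 1"
  proof
    fix i assume "i \<in> {1..l}"
    then have "nth_smallest A i \<in> A" using pair by (intro nth_smallest_in[OF fin]) auto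
    then show "0 \<le> x (nth_smallest A i) \<and> x (nth_smallest A i) \<le> 1" using A x01 by auto
  qed
  then have "\<bar>Yrec \<delta> (\<lambda>i. x (nth_smallest A i)) l - m k\<bar> \<le> P + tol + \<bar>m k\<bar> * P"
    unfolding P_def using close pair params unfolding tail_close_def
    by (intro Yrec_deviation_le) (auto simp: first_index_from_def)
  moreover have "P + tol + \<bar>m k\<bar> * P \<le> m k * real t powr (-b)"
  proof -
    define \<tau> where "\<tau> = real t powr (-b)"
    have "\<mu>\<^sub>0 \<le> m k" using mean_ge pair by auto
    have P: "P \<le> min \<mu>\<^sub>0 1 * \<tau> / 4" "0 \<le> P" "0 \<le> \<tau>"
      unfolding P_def \<tau>_def using prod_alpha_tail_le[OF A regular kl] pair params
      by (auto intro!: prod_alpha_nonneg simp: first_index_from_def)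
    have "min \<mu>\<^sub>0 1 * \<tau> \<le> \<mu>\<^sub>0 * \<tau>" "min \<mu>\<^sub>0 1 * \<tau> \<le> \<tau>" "\<mu>\<^sub>0 * \<tau> \<le> m k * \<tau>"
      using P(3) params(5) \<open>\<mu>\<^sub>0 \<le> m k\<close> by (auto intro: mult_right_mono mult_left_le_one_le)
    then have "P \<le> m k * \<tau> / 4" "P \<le> \<tau> / 4" using P(1) by linarith+
    moreover have "\<bar>m k\<bar> * P \<le> m k * (\<tau> / 4)"
      using calculation(2) \<open>\<mu>\<^sub>0 \<le> m k\<close> params by (simp add: mult_left_mono)
    moreover have "tol \<le> m k * \<tau> / 2"
      unfolding \<tau>_def using \<open>\<mu>\<^sub>0 \<le> m k\<close> by (simp add: divide_right_mono mult_right_mono)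
    ultimately show ?thesis unfolding \<tau>_def by linarith
  qed
  ultimately have "\<bar>Yrec \<delta> (\<lambda>i. x (nth_smallest A i)) l - m k\<bar> \<le> m k * real t powr (-b)"
    by linarith
  then show ?thesis by (simp add: powr_minus divide_inverse)
qed

lemma tail_weights_sq_sum_le:
  assumes A: "A \<subseteq> {1..t}" and regular: "regular_arrivals \<beta> \<gamma> t A" and kl: "(k, l) \<in> tracked_pairs A"
  shows "(\<Sum>i=first_index_from A (s k)..l. (smoothing_weight \<delta> l i)\<^sup>2) \<le> (L / 2) powr (-\<delta>)"
proof -
  note pair = tracked_pairD[OF A kl]
  define a where "a = first_index_from A (s k)"
  have "1 \<le> a" by (simp add: a_def first_index_from_def)
  have weight_le: "smoothing_weight \<delta> l i \<le> (L / 2) powr (-\<delta>)" if "i \<in> {a..l}" for i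
  proof -
    have "smoothing_weight \<delta> l i \<le> max (exp (- (L / 2) * max_arrivals \<beta> t powr (-\<delta>))) ((L / 2) powr (-\<delta>))"
      using that \<open>1 \<le> a\<close> pair L_pos L_less_tail_length[OF A regular kl] regular params
      by (intro smoothing_weight_le_max[where w = "card A"]) (auto simp: regular_arrivals_def a_def)
    then show ?thesis using small_weights by simp
  qed
  have "(\<Sum>i=a..l. (smoothing_weight \<delta> l i)\<^sup>2) \<le> (\<Sum>i=a..l. (L / 2) powr (-\<delta>) * smoothing_weight \<delta> l i)"
    using weight_le \<open>1 \<le> a\<close> smoothing_weight_nonneg[OF params(4)]
    by (intro sum_mono) (auto simp: power2_eq_square intro!: mult_right_mono)
  also have "\<dots> = (L / 2) powr (-\<delta>) * (1 - (\<Prod>r=a..l. alpha \<delta> r))"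
    using pair by (simp add: sum_distrib_left[symmetric] sum_smoothing_weight_from a_def)
  also have "\<dots> \<le> (L / 2) powr (-\<delta>)"
    using prod_alpha_nonneg[of \<delta> "{a..l}"] \<open>1 \<le> a\<close> params by (simp add: mult_left_le)
  finally show ?thesis unfolding a_def .
qed

lemma prob_not_tail_close:
  assumes A: "A \<subseteq> {1..t}" and regular: "regular_arrivals \<beta> \<gamma> t A" and kl: "(k, l) \<in> tracked_pairs A"
  shows "prob {\<omega>\<in>space M. \<not> tail_close A k l (X_vector \<omega>)} \<le> 2 * exp (-2 * tol\<^sup>2 / (L / 2) powr (-\<delta>))"
proof -
  note pair = tracked_pairD[OF A kl]
  have fin: "finite A" using A by (rule finite_subset) simp
  define I where "I = {first_index_from A (s k)..l}"
  define w where "w = smoothing_weight \<delta> l"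
  define T where "T = nth_smallest A"
  have I: "I \<subseteq> {1..card A}" using pair by (auto simp: I_def first_index_from_def)
  have T_in: "T ` I \<subseteq> {1..t}" unfolding T_def by (rule nth_smallest_image_subset[OF fin A I])
  have indep_I: "indep_vars (\<lambda>_. borel) (\<lambda>i. X (T i)) I"
    unfolding T_def by (rule indep_X_nth_smallest[OF A I])
  have "0 < (w l)\<^sup>2" unfolding w_def smoothing_weight_diag alpha_def using pair by simp
  also have "(w l)\<^sup>2 \<le> (\<Sum>i\<in>I. (w i)\<^sup>2)" using pair by (intro member_le_sum) (auto simp: I_def)
  finally have w_sq_pos: "0 < (\<Sum>i\<in>I. (w i)\<^sup>2)" .
  have "{\<omega>\<in>space M. \<not> tail_close A k l (X_vector \<omega>)}
      = {\<omega>\<in>space M. tol \<le> \<bar>(\<Sum>i\<in>I. w i * X (T i) \<omega>) - (\<Sum>i\<in>I. w i * expectation (X (T i)))\<bar>}"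
  proof -
    have "expectation (X (T i)) = m k" if "i \<in> I" for i
      using mean pair that unfolding I_def T_def by auto
    moreover have "X_vector \<omega> (T i) = X (T i) \<omega>" if "i \<in> I" for i \<omega>
      using T_in that unfolding X_vector_def by auto
    ultimately have "(\<Sum>i\<in>I. w i * X_vector \<omega> (T i)) = (\<Sum>i\<in>I. w i * X (T i) \<omega>)"
      "(\<Sum>i\<in>I. w i * m k) = (\<Sum>i\<in>I. w i * expectation (X (T i)))" for \<omega>
      by simp_all
    then show ?thesis
      unfolding tail_close_def I_def[symmetric] w_def[symmetric] T_def[symmetric] by (simp add: not_less)
  qed
  also have "prob \<dots> \<le> 2 * exp (-2 * tol\<^sup>2 / (\<Sum>i\<in>I. (w i)\<^sup>2))"
  proof (rule hoeffding_weighted_sum[OF _ indep_I _ _ w_sq_pos])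
    show "finite I" by (simp add: I_def)
    show "\<forall>i\<in>I. \<forall>\<omega>\<in>space M. 0 \<le> X (T i) \<omega> \<and> X (T i) \<omega> \<le> 1" using X01 T_in by auto
    show "\<forall>i\<in>I. 0 \<le> w i"
      using smoothing_weight_nonneg[OF params(4)] by (auto simp: I_def w_def first_index_from_def)
    show "0 \<le> tol" using params by simp
  qed
  also have "\<dots> \<le> 2 * exp (-2 * tol\<^sup>2 / (L / 2) powr (-\<delta>))"
  proof -
    have "tol\<^sup>2 / (L / 2) powr (-\<delta>) \<le> tol\<^sup>2 / (\<Sum>i\<in>I. (w i)\<^sup>2)"
      using tail_weights_sq_sum_le[OF A regular kl] w_sq_pos L_pos
      unfolding I_def w_def by (intro divide_left_mono) auto
    then show ?thesis by simp
  qed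
  finally show ?thesis .
qed

lemma tracked_pairs_subset: "A \<subseteq> {1..t} \<Longrightarrow> tracked_pairs A \<subseteq> {1..t} \<times> {1..t}"
proof safe
  fix k l assume "A \<subseteq> {1..t}" "(k, l) \<in> tracked_pairs A"
  from tracked_pairD[OF this] show "k \<in> {1..t}" "l \<in> {1..t}" by auto
qed

lemma tail_close_event: "{\<omega>\<in>space M. \<not> tail_close A k l (X_vector \<omega>)} \<in> events"
  unfolding tail_close_def by measurable

lemma prob_not_tails_close:
  assumes A: "A \<subseteq> {1..t}" and regular: "regular_arrivals \<beta> \<gamma> t A"
  shows "prob {\<omega>\<in>space M. \<not> tails_close A (X_vector \<omega>)} \<le> real t ^ 2 * (2 * exp (-2 * tol\<^sup>2 / (L / 2) powr (-\<delta>)))"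
proof -
  have fin: "finite (tracked_pairs A)"
    using tracked_pairs_subset[OF A] by (rule finite_subset) simp
  have "{\<omega>\<in>space M. \<not> tails_close A (X_vector \<omega>)}
      = (\<Union>p\<in>tracked_pairs A. {\<omega>\<in>space M. \<not> tail_close A (fst p) (snd p) (X_vector \<omega>)})"
    unfolding tails_close_def by auto
  also have "prob \<dots> \<le> (\<Sum>p\<in>tracked_pairs A. prob {\<omega>\<in>space M. \<not> tail_close A (fst p) (snd p) (X_vector \<omega>)})"
    using fin tail_close_event by (intro finite_measure_subadditive_finite) auto
  also have "\<dots> \<le> (\<Sum>p\<in>tracked_pairs A. 2 * exp (-2 * tol\<^sup>2 / (L / 2) powr (-\<delta>)))"
    using prob_not_tail_close[OF A regular] by (intro sum_mono) auto
  also have "\<dots> = real (card (tracked_pairs A)) * (2 * exp (-2 * tol\<^sup>2 / (L / 2) powr (-\<delta>)))"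
    by simp
  also have "\<dots> \<le> real t ^ 2 * (2 * exp (-2 * tol\<^sup>2 / (L / 2) powr (-\<delta>)))"
  proof -
    have "card (tracked_pairs A) \<le> card ({1..t} \<times> {1..t})"
      using tracked_pairs_subset[OF A] by (intro card_mono) auto
    then have "real (card (tracked_pairs A)) \<le> real (t * t)" by (intro of_nat_mono) simp
    then show ?thesis by (intro mult_right_mono) (simp_all add: power2_eq_square)
  qed
  finally show ?thesis .
qed

lemma E_good_if_tails_close:
  assumes x01: "\<forall>j\<in>{1..t}. 0 \<le> x j \<and> x j \<le> 1"
    and regular: "regular_arrivals \<beta> \<gamma> t (arrival_set t z)" and close: "tails_close (arrival_set t z) x"
  shows "E_good \<beta> \<gamma> \<delta> b t K s m x z"
  unfolding E_good_def arrival_time_eq_nth_smallest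
proof (intro conjI ballI impI)
  show "real (card (arrival_set t z)) \<le> 4 * real t powr (1 - \<beta>) / (1 - \<beta>)"
    using regular unfolding regular_arrivals_def max_arrivals_def by simp
  fix k l assume "k \<in> {1..K-1}" "l \<in> {1..card (arrival_set t z)}"
    "real (s k) + real t powr \<gamma> \<le> real (nth_smallest (arrival_set t z) l) \<and>
     nth_smallest (arrival_set t z) l < s (Suc k)"
  then have "(k, l) \<in> tracked_pairs (arrival_set t z)" unfolding tracked_pairs_def by auto
  then show "\<bar>Yrec \<delta> (\<lambda>i. x (nth_smallest (arrival_set t z) i)) l - m k\<bar> \<le> m k / real t powr b"
    using close x01 unfolding tails_close_def
    by (intro Yrec_close_if_tail_close[OF arrival_set_subset regular]) auto
qed

definition good_given :: "nat set \<Rightarrow> (nat \<Rightarrow> real) \<Rightarrow> bool" where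
  "good_given A x \<longleftrightarrow> real (card A) \<le> 4 * real t powr (1 - \<beta>) / (1 - \<beta>) \<and>
     (\<forall>k\<in>{1..K-1}. \<forall>l\<in>{1..card A}.
        real (s k) + real t powr \<gamma> \<le> real (nth_smallest A l) \<and> nth_smallest A l < s (Suc k) \<longrightarrow>
        \<bar>(\<Sum>i=1..l. smoothing_weight \<delta> l i * x (nth_smallest A i)) - m k\<bar> \<le> m k / real t powr b)"

lemma E_good_iff_good_given: "E_good \<beta> \<gamma> \<delta> b t K s m x z \<longleftrightarrow> good_given (arrival_set t z) x"
  unfolding E_good_def good_given_def arrival_time_eq_nth_smallest Yrec_eq_weighted_sum ..

lemma E_good_event: "{\<omega>\<in>space M. E_good \<beta> \<gamma> \<delta> b t K s m (X_vector \<omega>) (Z_vector \<omega>)} \<in> events"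
  unfolding E_good_iff_good_given by (rule arrival_set_event) (unfold good_given_def, measurable)

lemma prob_regular_not_tails_close:
  "prob {\<omega>\<in>space M. regular_arrivals \<beta> \<gamma> t (arrival_set t (Z_vector \<omega>)) \<and>
                    \<not> tails_close (arrival_set t (Z_vector \<omega>)) (X_vector \<omega>)}
     \<le> real t ^ 2 * (2 * exp (-2 * tol\<^sup>2 / (L / 2) powr (-\<delta>)))"
proof -
  define G where "G = {A\<in>Pow {1..t}. regular_arrivals \<beta> \<gamma> t A}"
  define B where "B A = {x\<in>space (PiM {1..t} (\<lambda>_. borel)). \<not> tails_close A x}" for A
  define C where "C A = {z\<in>space (PiM {1..t} (\<lambda>_. borel)). arrival_set t z = A}" for A
  have "{\<omega>\<in>space M. regular_arrivals \<beta> \<gamma> t (arrival_set t (Z_vector \<omega>)) \<and>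
                    \<not> tails_close (arrival_set t (Z_vector \<omega>)) (X_vector \<omega>)}
      = (\<Union>A\<in>G. {\<omega>\<in>space M. X_vector \<omega> \<in> B A \<and> Z_vector \<omega> \<in> C A})"
    using arrival_set_subset X_vector_in_space Z_vector_in_space unfolding G_def B_def C_def by auto
  also have "prob \<dots> \<le> real t ^ 2 * (2 * exp (-2 * tol\<^sup>2 / (L / 2) powr (-\<delta>)))"
  proof (rule prob_indep_mixture_le[OF indep_var_X_Z_vectors])
    show "finite G" by (simp add: G_def)
    show "disjoint_family_on C G" by (auto simp: disjoint_family_on_def C_def)
    fix A assume A: "A \<in> G"
    show "B A \<in> sets (PiM {1..t} (\<lambda>_. borel))"
      unfolding B_def tails_close_iff tail_close_def by measurable
    show "C A \<in> sets (PiM {1..t} (\<lambda>_. borel))"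
      using A unfolding C_def G_def by (subst arrival_set_eq_iff) (auto, measurable)
    have "{\<omega>\<in>space M. X_vector \<omega> \<in> B A} = {\<omega>\<in>space M. \<not> tails_close A (X_vector \<omega>)}"
      unfolding B_def using X_vector_in_space by auto
    then show "prob {\<omega>\<in>space M. X_vector \<omega> \<in> B A} \<le> real t ^ 2 * (2 * exp (-2 * tol\<^sup>2 / (L / 2) powr (-\<delta>)))"
      using A prob_not_tails_close unfolding G_def by auto
  qed simp
  finally show ?thesis .
qed

lemma prob_E_good_ge:
  "1 - (exp (- max_arrivals \<beta> t / 2) + real t * exp (- (real t powr (\<gamma> - \<beta>) / 4))
        + real t ^ 2 * (2 * exp (-2 * tol\<^sup>2 / (L / 2) powr (-\<delta>))))
     \<le> prob {\<omega>\<in>space M. E_good \<beta> \<gamma> \<delta> b t K s m (\<lambda>j. X j \<omega>) (\<lambda>j. Z j \<omega>)}"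
proof -
  define good where "good = {\<omega>\<in>space M. E_good \<beta> \<gamma> \<delta> b t K s m (X_vector \<omega>) (Z_vector \<omega>)}"
  define irregular where "irregular = {\<omega>\<in>space M. \<not> regular_arrivals \<beta> \<gamma> t (arrival_set t (Z_vector \<omega>))}"
  define unlucky where "unlucky = {\<omega>\<in>space M. regular_arrivals \<beta> \<gamma> t (arrival_set t (Z_vector \<omega>)) \<and>
                    \<not> tails_close (arrival_set t (Z_vector \<omega>)) (X_vector \<omega>)}"
  have good_eq: "{\<omega>\<in>space M. E_good \<beta> \<gamma> \<delta> b t K s m (\<lambda>j. X j \<omega>) (\<lambda>j. Z j \<omega>)} = good"
    unfolding good_def by (intro Collect_cong conj_cong refl E_good_cong) (auto simp: X_vector_def Z_vector_def)
  have "prob (space M - good) \<le> prob irregular + prob unlucky"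
  proof -
    have "space M - good \<subseteq> irregular \<union> unlucky"
      using E_good_if_tails_close X01 unfolding good_def irregular_def unlucky_def X_vector_def by auto
    moreover have "irregular \<in> events"
      unfolding irregular_def by (rule arrival_set_event) measurable
    moreover have "unlucky \<in> events"
      unfolding unlucky_def by (rule arrival_set_event) (unfold tails_close_iff tail_close_def, measurable)
    ultimately show ?thesis by (meson finite_measure_mono measure_Un_le order_trans sets.Un)
  qed
  moreover have "prob irregular \<le> exp (- max_arrivals \<beta> t / 2) + real t * exp (- (real t powr (\<gamma> - \<beta>) / 4))"
    unfolding irregular_def arrival_set_Z_vector using params Z01 Z_prob
    by (intro prob_irregular_arrivals indep_Z) auto
  moreover have "prob unlucky \<le> real t ^ 2 * (2 * exp (-2 * tol\<^sup>2 / (L / 2) powr (-\<delta>)))"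
    unfolding unlucky_def by (rule prob_regular_not_tails_close)
  moreover have "prob (space M - good) = 1 - prob good"
    unfolding good_def by (rule prob_compl[OF E_good_event])
  ultimately show ?thesis unfolding good_eq by linarith
qed

end

section \<open>Asymptotics and the main theorem\<close>

lemma eventually_forgetting:
  fixes e q \<delta> K :: real
  assumes "0 < e" "0 < q" "0 < \<delta>" "0 < K"
  shows "eventually (\<lambda>t::real. exp (- (t powr (e + q * \<delta>) / 4) * (4 * t powr q / q) powr (-\<delta>))
      \<le> K * t powr (-(\<delta> * (e + q * \<delta>) / 4)) / 4) at_top"
  using assms by real_asymp

lemma eventually_small_weights:
  fixes e q \<delta> :: real
  assumes "0 < e" "0 < q" "0 < \<delta>"
  shows "eventually (\<lambda>t::real. exp (- (t powr (e + q * \<delta>) / 4 / 2) * (4 * t powr q / q) powr (-\<delta>))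
      \<le> (t powr (e + q * \<delta>) / 4 / 2) powr (-\<delta>)) at_top"
  using assms by real_asymp

lemma eventually_many_arrivals_small:
  fixes q b :: real
  assumes "0 < b" "b < q"
  shows "eventually (\<lambda>t::real. exp (- (4 * t powr q / q) / 2) \<le> exp (- (t powr b)) / 3) at_top"
  using assms by real_asymp

lemma eventually_few_arrivals_small:
  fixes g b :: real
  assumes "0 < b" "b < g"
  shows "eventually (\<lambda>t::real. t * exp (- (t powr g / 4)) \<le> exp (- (t powr b)) / 3) at_top"
  using assms by real_asymp

lemma eventually_deviation_small:
  fixes g \<delta> \<mu> :: real
  assumes "0 < g" "0 < \<delta>" "0 < \<mu>"
  shows "eventually (\<lambda>t::real. t ^ 2 * (2 * exp (-2 * (\<mu> * t powr (-(\<delta> * g / 4)) / 2)\<^sup>2 / (t powr g / 4 / 2) powr (-\<delta>)))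
      \<le> exp (- (t powr (\<delta> * g / 4))) / 3) at_top"
  using assms by real_asymp

definition tracking_conditions :: "real \<Rightarrow> real \<Rightarrow> real \<Rightarrow> real \<Rightarrow> real \<Rightarrow> nat \<Rightarrow> bool" where
  "tracking_conditions \<beta> \<gamma> \<delta> \<mu> b t \<longleftrightarrow> 1 \<le> t \<and>
     exp (- min_window_arrivals \<beta> \<gamma> t * max_arrivals \<beta> t powr (-\<delta>)) \<le> min \<mu> 1 * real t powr (-b) / 4 \<and>
     exp (- (min_window_arrivals \<beta> \<gamma> t / 2) * max_arrivals \<beta> t powr (-\<delta>))
       \<le> (min_window_arrivals \<beta> \<gamma> t / 2) powr (-\<delta>) \<and>
     exp (- max_arrivals \<beta> t / 2) + real t * exp (- (real t powr (\<gamma> - \<beta>) / 4))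
       + real t ^ 2 * (2 * exp (-2 * (\<mu> * real t powr (-b) / 2)\<^sup>2 / (min_window_arrivals \<beta> \<gamma> t / 2) powr (-\<delta>)))
       \<le> exp (- (real t powr b))"

lemma eventually_tracking_conditions:
  fixes \<beta> \<gamma> \<delta> \<mu> :: real
  assumes "0 < \<beta>" "\<beta> < \<gamma>" "\<gamma> < 1" "0 < \<delta>" "\<delta> * (1 - \<beta>) < \<gamma> - \<beta>" "0 < \<mu>"
  shows "eventually (tracking_conditions \<beta> \<gamma> \<delta> \<mu> (\<delta> * (\<gamma> - \<beta>) / 4)) sequentially"
proof -
  define b where "b = \<delta> * (\<gamma> - \<beta>) / 4"
  define e where "e = \<gamma> - \<beta> - (1 - \<beta>) * \<delta>"
  have g: "\<gamma> - \<beta> = e + (1 - \<beta>) * \<delta>" by (simp add: e_def)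
  have "0 < e" "0 < 1 - \<beta>" using assms by (simp_all add: e_def algebra_simps)
  have "\<delta> < 1"
    using assms by (smt (verit) mult_less_cancel_right2)
  then have "\<delta> * (\<gamma> - \<beta>) < \<gamma> - \<beta>"
    using assms mult_strict_right_mono[of \<delta> 1 "\<gamma> - \<beta>"] by simp
  then have "b < \<gamma> - \<beta>" unfolding b_def using assms(2) by linarith
  then have "b < 1 - \<beta>" using assms(3) by linarith
  have "0 < b" using assms by (simp add: b_def)
  have "0 < min \<mu> 1" "0 < \<gamma> - \<beta>" using assms by simp_all
  have "eventually (\<lambda>t::real. 1 \<le> t \<and>
      exp (- (t powr (\<gamma> - \<beta>) / 4) * (4 * t powr (1 - \<beta>) / (1 - \<beta>)) powr (-\<delta>)) \<le> min \<mu> 1 * t powr (-b) / 4 \<and>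
      exp (- (t powr (\<gamma> - \<beta>) / 4 / 2) * (4 * t powr (1 - \<beta>) / (1 - \<beta>)) powr (-\<delta>))
        \<le> (t powr (\<gamma> - \<beta>) / 4 / 2) powr (-\<delta>) \<and>
      exp (- (4 * t powr (1 - \<beta>) / (1 - \<beta>)) / 2) + t * exp (- (t powr (\<gamma> - \<beta>) / 4))
        + t ^ 2 * (2 * exp (-2 * (\<mu> * t powr (-b) / 2)\<^sup>2 / (t powr (\<gamma> - \<beta>) / 4 / 2) powr (-\<delta>)))
        \<le> exp (- (t powr b))) at_top"
    using eventually_ge_at_top[of 1]
      eventually_forgetting[OF \<open>0 < e\<close> \<open>0 < 1 - \<beta>\<close> \<open>0 < \<delta>\<close> \<open>0 < min \<mu> 1\<close>]
      eventually_small_weights[OF \<open>0 < e\<close> \<open>0 < 1 - \<beta>\<close> \<open>0 < \<delta>\<close>]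
      eventually_many_arrivals_small[OF \<open>0 < b\<close> \<open>b < 1 - \<beta>\<close>]
      eventually_few_arrivals_small[OF \<open>0 < b\<close> \<open>b < \<gamma> - \<beta>\<close>]
      eventually_deviation_small[OF \<open>0 < \<gamma> - \<beta>\<close> \<open>0 < \<delta>\<close> \<open>0 < \<mu>\<close>]
    unfolding g[symmetric] b_def by eventually_elim auto
  from eventually_compose_filterlim[OF this filterlim_real_sequentially]
  show ?thesis unfolding tracking_conditions_def min_window_arrivals_def max_arrivals_def b_def by simp
qed

lemma ge_index_if_strict_increasing:
  fixes s :: "nat \<Rightarrow> nat"
  assumes "1 \<le> s 1" "\<forall>k\<in>{1..<K}. s k < s (Suc k)"
  shows "\<forall>k\<in>{1..K-1}. k \<le> s k"
proof
  fix k assume "k \<in> {1..K-1}"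
  then show "k \<le> s k"
  proof (induction k)
    case (Suc k)
    show ?case
    proof (cases "k = 0")
      case True
      then show ?thesis using assms(1) by simp
    next
      case False
      then have "k \<le> s k" "k \<in> {1..<K}" using Suc by auto
      moreover have "s k < s (Suc k)" using assms(2) \<open>k \<in> {1..<K}\<close> by blast
      ultimately show ?thesis by simp
    qed
  qed simp
qed

lemma measure_E_good_ge:
  fixes N :: "'a measure" and X Z :: "nat \<Rightarrow> 'a \<Rightarrow> real"
  assumes params: "0 < \<beta>" "\<beta> < \<gamma>" "\<gamma> < 1" "0 < \<delta>" "0 < \<mu>\<^sub>0" "0 < b"
    and conditions: "tracking_conditions \<beta> \<gamma> \<delta> \<mu>\<^sub>0 b t"
    and "prob_space N"
    and "prob_space.indep_vars N (\<lambda>_. borel) (\<lambda>i. case i of Inl j \<Rightarrow> X j | Inr j \<Rightarrow> Z j) ({1..t} <+> {1..t})"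
    and "\<forall>j\<in>{1..t}. \<forall>\<omega>\<in>space N. 0 \<le> X j \<omega> \<and> X j \<omega> \<le> 1"
    and "\<forall>j\<in>{1..t}. \<forall>\<omega>\<in>space N. Z j \<omega> = 0 \<or> Z j \<omega> = 1"
    and "\<forall>j\<in>{1..t}. measure N {\<omega>\<in>space N. Z j \<omega> = 1} = real j powr (-\<beta>)"
    and "s 1 = 1" "\<forall>k\<in>{1..<K}. s k < s (Suc k)"
    and "\<forall>k\<in>{1..K-1}. \<forall>j. s k \<le> j \<and> j < s (Suc k) \<longrightarrow> (\<integral>\<omega>. X j \<omega> \<partial>N) = m k"
    and "\<forall>k\<in>{1..K-1}. \<mu>\<^sub>0 \<le> m k"
  shows "1 - exp (- (real t powr b)) \<le> measure N {\<omega>\<in>space N. E_good \<beta> \<gamma> \<delta> b t K s m (\<lambda>j. X j \<omega>) (\<lambda>j. Z j \<omega>)}"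
proof -
  interpret smoothing_tracking N X Z t \<beta> \<gamma> \<delta> \<mu>\<^sub>0 b K s m
    using assms ge_index_if_strict_increasing[of s K] unfolding tracking_conditions_def
    by (intro smoothing_tracking.intro sampled_sequence.intro smoothing_tracking_axioms.intro
        sampled_sequence_axioms.intro) auto
  show ?thesis using prob_E_good_ge conditions unfolding tracking_conditions_def by linarith
qed

theorem theorem1:
  fixes \<gamma>\<^sub>0 \<mu>\<^sub>0 \<beta> \<gamma> \<delta> :: real
  assumes "0 < \<gamma>\<^sub>0" "\<gamma>\<^sub>0 \<le> 1" "0 < \<mu>\<^sub>0"
    and "0 < \<beta>" "\<beta> < \<gamma>" "\<gamma> < \<gamma>\<^sub>0"
    and "0 < \<delta>" "\<delta> < (\<gamma> - \<beta>) / (1 - \<beta>)"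
  shows "\<exists>b>0. \<exists>\<theta>>0. \<exists>t\<^sub>0. \<forall>t\<ge>t\<^sub>0. \<forall>(N :: 'a measure) (X :: nat \<Rightarrow> 'a \<Rightarrow> real) (Z :: nat \<Rightarrow> 'a \<Rightarrow> real)
            (M :: nat) (s :: nat \<Rightarrow> nat) (m :: nat \<Rightarrow> real).
      t \<ge> 1 \<and> prob_space N \<and>
      prob_space.indep_vars N (\<lambda>_. borel) (\<lambda>i. case i of Inl j \<Rightarrow> X j | Inr j \<Rightarrow> Z j) ({1..t} <+> {1..t}) \<and>
      (\<forall>j \<in> {1..t}. \<forall>\<omega> \<in> space N. 0 \<le> X j \<omega> \<and> X j \<omega> \<le> 1) \<and>
      (\<forall>j \<in> {1..t}. \<forall>\<omega> \<in> space N. Z j \<omega> = 0 \<or> Z j \<omega> = 1) \<and>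
      (\<forall>j \<in> {1..t}. measure N {\<omega> \<in> space N. Z j \<omega> = 1} = real j powr (- \<beta>)) \<and>
      s 1 = 1 \<and> s M = t \<and> (\<forall>k \<in> {1..<M}. s k < s (Suc k)) \<and>
      (\<forall>k \<in> {1..M-1}. \<forall>j. s k \<le> j \<and> j < s (Suc k) \<longrightarrow> (\<integral>\<omega>. X j \<omega> \<partial>N) = m k) \<and>
      (\<forall>k \<in> {1..M-1}. real (s (Suc k) - s k) \<ge> real t powr \<gamma>\<^sub>0) \<and>
      (\<forall>k \<in> {1..M-1}. m k \<ge> \<mu>\<^sub>0)
      \<longrightarrow> measure N {\<omega> \<in> space N. E_good \<beta> \<gamma> \<delta> b t M s m (\<lambda>j. X j \<omega>) (\<lambda>j. Z j \<omega>)}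
            \<ge> 1 - exp (- (real t powr \<theta>))"
proof -
  have "\<gamma> < 1" "\<delta> * (1 - \<beta>) < \<gamma> - \<beta>"
    using assms by (simp_all add: pos_less_divide_eq)
  define b where "b = \<delta> * (\<gamma> - \<beta>) / 4"
  have "0 < b" using assms by (simp add: b_def)
  obtain t\<^sub>0 where t\<^sub>0: "\<And>t. t\<^sub>0 \<le> t \<Longrightarrow> tracking_conditions \<beta> \<gamma> \<delta> \<mu>\<^sub>0 b t"
    using eventually_tracking_conditions[of \<beta> \<gamma> \<delta> \<mu>\<^sub>0] assms \<open>\<gamma> < 1\<close> \<open>\<delta> * (1 - \<beta>) < \<gamma> - \<beta>\<close>
    unfolding eventually_sequentially b_def by auto
  show ?thesis
    using measure_E_good_ge[OF assms(4,5) \<open>\<gamma> < 1\<close> assms(7,3) \<open>0 < b\<close>] t\<^sub>0 \<open>0 < b\<close>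
    by (intro exI[of _ b] conjI exI[of _ t\<^sub>0] allI impI) blast+
qed

end
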